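(* Let $G$ be a finite simple graph with at least one edge. The following statements are equivalent: (1) $G$ has a matching that saturates every vertex of $\mathrm{core}(G)$; (2) $G$ has a minimum mitigating set which is a matching; (3) for every $S\subseteq \mathrm{core}(G)$, $\mathrm{es}_{\Delta}(G[N[S]])\leq \frac{|N[S]|}{2}$.
   Context: $\mathrm{core}(G)$ is the set of vertices of $G$ of maximum degree $\Delta(G)$. A set $S\subseteq E(G)$ is a mitigating set if $\Delta(G-S)\leq\Delta(G)-1$; a minimum mitigating set is one of minimum size. The $\Delta$-edge stability number $\mathrm{es}_{\Delta}(H)$ of a graph $H$ is the minimum number of edges whose removal results in a subgraph $H'$ with $\Delta(H')=\Delta(H)-1$. For $S\subseteq V(G)$, $N[S]=\bigcup_{v\in S}(N(v)\cup\{v\})$ is the closed neighborhood of $S$, and $G[N[S]]$ is the subgraph induced by it. *)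

theory Defs
  imports Complex_Main
begin

definition simple_graph :: "'a set \<Rightarrow> 'a set set \<Rightarrow> bool" where
  "simple_graph V E \<longleftrightarrow> finite V \<and> (\<forall>e\<in>E. e \<subseteq> V \<and> card e = 2)"

definition degree :: "'a set set \<Rightarrow> 'a \<Rightarrow> nat" where
  "degree E v = card {e \<in> E. v \<in> e}"

text \<open>Maximum degree; 0 for the graph with no vertices.\<close>
definition max_degree :: "'a set \<Rightarrow> 'a set set \<Rightarrow> nat" where
  "max_degree V E = Max (insert 0 (degree E ` V))"

definition core :: "'a set \<Rightarrow> 'a set set \<Rightarrow> 'a set" where
  "core V E = {v \<in> V. degree E v = max_degree V E}"

definition mitigating_set :: "'a set \<Rightarrow> 'a set set \<Rightarrow> 'a set set \<Rightarrow> bool" where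
  "mitigating_set V E S \<longleftrightarrow> S \<subseteq> E \<and> max_degree V (E - S) \<le> max_degree V E - 1"

definition min_mitigating_set :: "'a set \<Rightarrow> 'a set set \<Rightarrow> 'a set set \<Rightarrow> bool" where
  "min_mitigating_set V E S \<longleftrightarrow> mitigating_set V E S \<and>
     (\<forall>T. mitigating_set V E T \<longrightarrow> card S \<le> card T)"

definition matching :: "'a set set \<Rightarrow> 'a set set \<Rightarrow> bool" where
  "matching E M \<longleftrightarrow> M \<subseteq> E \<and> (\<forall>e1\<in>M. \<forall>e2\<in>M. e1 \<noteq> e2 \<longrightarrow> e1 \<inter> e2 = {})"

definition saturates :: "'a set set \<Rightarrow> 'a set \<Rightarrow> bool" where
  "saturates M X \<longleftrightarrow> (\<forall>v\<in>X. \<exists>e\<in>M. v \<in> e)"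

definition es_delta :: "'a set \<Rightarrow> 'a set set \<Rightarrow> nat" where
  "es_delta V E = (LEAST k. \<exists>S. S \<subseteq> E \<and> card S = k \<and>
      max_degree V (E - S) = max_degree V E - 1)"

definition closed_nbhd :: "'a set set \<Rightarrow> 'a set \<Rightarrow> 'a set" where
  "closed_nbhd E S = S \<union> {u. \<exists>v\<in>S. {u, v} \<in> E}"

definition induced_edges :: "'a set set \<Rightarrow> 'a set \<Rightarrow> 'a set set" where
  "induced_edges E X = {e \<in> E. e \<subseteq> X}"

end

theory Submission
  imports Defs
begin

text \<open>
  Removing a set of edges lowers the maximum degree exactly when every core vertex loses an edge,
  so mitigating sets are the edge sets covering the core.

  (1) \<open>\<Rightarrow>\<close> (2): among the minimum mitigating sets take one sharing the most edges with a
  matching \<open>M\<close> that saturates the core. If two of its edges met, the one outside \<open>M\<close> could be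
  traded for the \<open>M\<close>-edge at the core vertex that it alone covers.

  (1) \<open>\<Rightarrow>\<close> (3): for nonempty \<open>S \<subseteq> core(G)\<close> the graph \<open>G[N[S]]\<close> has the same maximum
  degree as \<open>G\<close>, its core vertices keep all their edges, and the edges of \<open>M\<close> inside \<open>N[S]\<close>
  form a mitigating matching of it.

  (3) \<open>\<Rightarrow>\<close> (1): a minimum mitigating set of \<open>G[N[S]]\<close> covers \<open>S\<close>; extracting a matching
  from it greedily shows that \<open>S\<close> has a matching inside \<open>S\<close> missing at most
  \<open>|N[S] - S|\<close> of its vertices. This deficiency condition forces a matching saturating the
  core, by Lovasz's proof of Tutte's theorem: in an edge-maximal counterexample the
  symmetric difference of two saturating matchings through added non-edges can be recombined,
  so every non-universal vertex has a transitive neighbourhood; then the non-universal vertices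
  fall into cliques, and the odd cliques inside the core can be completed by distinct universal
  vertices.
\<close>

section \<open>Matchings and degrees\<close>

definition saturable :: "'a set set \<Rightarrow> 'a set \<Rightarrow> bool" where
  "saturable E X \<longleftrightarrow> (\<exists>M. matching E M \<and> saturates M X)"

lemma card_2_other_elem:
  assumes "card e = 2" "x \<in> e"
  obtains y where "y \<noteq> x" "e = {x, y}"
  using assms by (metis card_2_iff doubleton_eq_iff insertE singletonD)

lemma simple_graph_finite: "simple_graph V E \<Longrightarrow> finite V"
  unfolding simple_graph_def by simp

lemma simple_graph_edge_subset: "simple_graph V E \<Longrightarrow> e \<in> E \<Longrightarrow> e \<subseteq> V"
  unfolding simple_graph_def by simp

lemma simple_graph_card_edge: "simple_graph V E \<Longrightarrow> e \<in> E \<Longrightarrow> card e = 2"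
  unfolding simple_graph_def by simp

lemma simple_graph_finite_edges: "simple_graph V E \<Longrightarrow> finite E"
proof -
  assume "simple_graph V E"
  then have "E \<subseteq> Pow V" "finite V"
    unfolding simple_graph_def by auto
  then show "finite E"
    by (simp add: finite_subset)
qed

lemma matching_iff_pairwise_disjnt: "matching E M \<longleftrightarrow> M \<subseteq> E \<and> pairwise disjnt M"
  unfolding matching_def pairwise_def disjnt_def by blast

lemma pairwise_disjnt_edge_unique:
  "pairwise disjnt M \<Longrightarrow> e \<in> M \<Longrightarrow> e' \<in> M \<Longrightarrow> v \<in> e \<Longrightarrow> v \<in> e' \<Longrightarrow> e = e'"
  unfolding pairwise_def disjnt_def by blast

lemma matching_insert:
  "matching E M \<Longrightarrow> e \<in> E \<Longrightarrow> (\<forall>f\<in>M. e \<inter> f = {}) \<Longrightarrow> matching E (insert e M)"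
  unfolding matching_def by blast

lemma card_Union_pairwise_disjnt_edges:
  assumes "pairwise disjnt M" "\<forall>e\<in>M. card e = 2"
  shows "card (\<Union>M) = 2 * card M"
proof -
  have "card (\<Union>M) = (\<Sum>e\<in>M. card e)"
    using assms by (intro card_Union_disjoint) (simp_all add: card_ge_0_finite)
  then show ?thesis
    using assms(2) by simp
qed

lemma degree_mono: "finite F \<Longrightarrow> F' \<subseteq> F \<Longrightarrow> degree F' v \<le> degree F v"
  unfolding degree_def by (rule card_mono) auto

lemma degree_pos: "finite F \<Longrightarrow> e \<in> F \<Longrightarrow> v \<in> e \<Longrightarrow> 0 < degree F v"
  unfolding degree_def by (subst card_gt_0_iff) auto

lemma degree_Diff_less_iff:
  assumes "finite F" "S \<subseteq> F"
  shows "degree (F - S) v < degree F v \<longleftrightarrow> (\<exists>e\<in>S. v \<in> e)"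
proof
  assume less: "degree (F - S) v < degree F v"
  show "\<exists>e\<in>S. v \<in> e"
  proof (rule ccontr)
    assume "\<not> (\<exists>e\<in>S. v \<in> e)"
    then have "{e \<in> F - S. v \<in> e} = {e \<in> F. v \<in> e}"
      by blast
    with less show False
      unfolding degree_def by simp
  qed
next
  assume "\<exists>e\<in>S. v \<in> e"
  then have "{e \<in> F - S. v \<in> e} \<subset> {e \<in> F. v \<in> e}"
    using assms(2) by blast
  then show "degree (F - S) v < degree F v"
    unfolding degree_def using assms(1) by (simp add: psubset_card_mono)
qed

lemma degree_insert_le: "finite F \<Longrightarrow> degree (insert e F) v \<le> Suc (degree F v)"
proof -
  assume "finite F"
  have "{f \<in> insert e F. v \<in> f} \<subseteq> insert e {f \<in> F. v \<in> f}"
    by blast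
  then have "degree (insert e F) v \<le> card (insert e {f \<in> F. v \<in> f})"
    unfolding degree_def using \<open>finite F\<close> by (intro card_mono) auto
  also have "\<dots> \<le> Suc (degree F v)"
    unfolding degree_def using \<open>finite F\<close> by (simp add: card_insert_if)
  finally show ?thesis .
qed

lemma degree_pairwise_disjnt_le_1:
  assumes "finite M" "pairwise disjnt M"
  shows "degree M v \<le> 1"
proof -
  have "\<forall>e\<in>{e \<in> M. v \<in> e}. \<forall>e'\<in>{e \<in> M. v \<in> e}. e = e'"
    using pairwise_disjnt_edge_unique[OF assms(2)] by blast
  then show ?thesis
    unfolding degree_def One_nat_def using assms(1) by (subst card_le_Suc0_iff_eq) auto
qed

lemma degree_le_max_degree: "finite V \<Longrightarrow> v \<in> V \<Longrightarrow> degree E v \<le> max_degree V E"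
  unfolding max_degree_def by simp

lemma max_degree_leI: "finite V \<Longrightarrow> (\<And>v. v \<in> V \<Longrightarrow> degree E v \<le> k) \<Longrightarrow> max_degree V E \<le> k"
  unfolding max_degree_def by simp

lemma max_degree_no_edges: "finite V \<Longrightarrow> max_degree V {} = 0"
  using max_degree_leI[of V "{}" 0] by (simp add: degree_def)

lemma max_degree_pos:
  assumes "simple_graph V E" "E \<noteq> {}"
  shows "0 < max_degree V E"
proof -
  obtain e where "e \<in> E"
    using assms(2) by blast
  obtain v w where "e = {v, w}"
    using simple_graph_card_edge[OF assms(1) \<open>e \<in> E\<close>] by (meson card_2_iff)
  then have "v \<in> e"
    by simp
  then have "0 < degree E v"
    using assms simple_graph_finite_edges degree_pos \<open>e \<in> E\<close> by metis
  also have "degree E v \<le> max_degree V E"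
    using assms \<open>v \<in> e\<close> \<open>e \<in> E\<close> simple_graph_edge_subset[OF assms(1)]
    by (intro degree_le_max_degree simple_graph_finite) blast+
  finally show ?thesis .
qed

section \<open>Mitigating sets and the \<open>\<Delta>\<close>-edge stability number\<close>

lemma mitigating_set_iff_saturates_core:
  assumes "finite V" "finite E" "0 < max_degree V E" "S \<subseteq> E"
  shows "mitigating_set V E S \<longleftrightarrow> saturates S (core V E)"
proof
  assume mit: "mitigating_set V E S"
  show "saturates S (core V E)"
    unfolding saturates_def
  proof
    fix v
    assume "v \<in> core V E"
    then have "v \<in> V" "degree E v = max_degree V E"
      unfolding core_def by auto
    have "degree (E - S) v \<le> max_degree V (E - S)"
      using \<open>v \<in> V\<close> assms(1) by (rule degree_le_max_degree[rotated])
    also have "\<dots> < degree E v"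
      using mit assms(3) \<open>degree E v = max_degree V E\<close> unfolding mitigating_set_def by linarith
    finally show "\<exists>e\<in>S. v \<in> e"
      using degree_Diff_less_iff[OF assms(2,4)] by blast
  qed
next
  assume sat: "saturates S (core V E)"
  have "max_degree V (E - S) \<le> max_degree V E - 1"
  proof (rule max_degree_leI[OF assms(1)])
    fix v
    assume "v \<in> V"
    then have le: "degree E v \<le> max_degree V E"
      using assms(1) by (rule degree_le_max_degree[rotated])
    show "degree (E - S) v \<le> max_degree V E - 1"
    proof (cases "v \<in> core V E")
      case True
      then have "degree (E - S) v < degree E v"
        using sat degree_Diff_less_iff[OF assms(2,4)] unfolding saturates_def by blast
      with le show ?thesis
        by linarith
    next
      case False
      then have "degree E v < max_degree V E"
        using le \<open>v \<in> V\<close> unfolding core_def by simp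
      moreover have "degree (E - S) v \<le> degree E v"
        using assms(2) by (rule degree_mono) blast
      ultimately show ?thesis
        by linarith
    qed
  qed
  with assms(4) show "mitigating_set V E S"
    unfolding mitigating_set_def by simp
qed

lemma min_mitigating_set_exists:
  assumes "finite V"
  shows "\<exists>S. min_mitigating_set V E S"
proof -
  have "mitigating_set V E E"
    unfolding mitigating_set_def using max_degree_no_edges[OF assms] by simp
  then show ?thesis
    unfolding min_mitigating_set_def by (rule ex_has_least_nat)
qed

text \<open>Putting back one edge of a minimum mitigating set raises some degree to \<open>\<Delta>\<close>, and
  it raises every degree by at most one.\<close>

lemma max_degree_Diff_min_mitigating_set:
  assumes "finite V" "finite E" "0 < max_degree V E" "min_mitigating_set V E S"
  shows "max_degree V (E - S) = max_degree V E - 1"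
proof -
  have SE: "S \<subseteq> E" and le: "max_degree V (E - S) \<le> max_degree V E - 1"
    using assms(4) unfolding min_mitigating_set_def mitigating_set_def by auto
  have "S \<noteq> {}"
    using le assms(3) by auto
  then obtain e where "e \<in> S"
    by blast
  have "\<not> mitigating_set V E (S - {e})"
  proof
    assume "mitigating_set V E (S - {e})"
    then have "card S \<le> card (S - {e})"
      using assms(4) unfolding min_mitigating_set_def by blast
    moreover have "card (S - {e}) < card S"
      using \<open>e \<in> S\<close> SE assms(2) by (meson card_Diff1_less finite_subset)
    ultimately show False
      by simp
  qed
  then obtain v where "v \<in> V" and v: "max_degree V E - 1 < degree (E - (S - {e})) v"
    using SE max_degree_leI[OF assms(1), of "E - (S - {e})" "max_degree V E - 1"]
    unfolding mitigating_set_def by force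
  have "E - (S - {e}) = insert e (E - S)"
    using \<open>e \<in> S\<close> SE by blast
  then have "degree (E - (S - {e})) v \<le> Suc (degree (E - S) v)"
    using degree_insert_le assms(2) by (metis finite_Diff)
  also have "degree (E - S) v \<le> max_degree V (E - S)"
    using \<open>v \<in> V\<close> assms(1) by (rule degree_le_max_degree[rotated])
  finally show ?thesis
    using v le by linarith
qed

lemma es_delta_eq_card_min_mitigating_set:
  assumes "finite V" "finite E" "0 < max_degree V E" "min_mitigating_set V E S"
  shows "es_delta V E = card S"
  unfolding es_delta_def
proof (rule Least_equality)
  show "\<exists>R\<subseteq>E. card R = card S \<and> max_degree V (E - R) = max_degree V E - 1"
    using assms max_degree_Diff_min_mitigating_set
    unfolding min_mitigating_set_def mitigating_set_def by blast
next
  fix k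
  assume "\<exists>R\<subseteq>E. card R = k \<and> max_degree V (E - R) = max_degree V E - 1"
  then obtain R where "mitigating_set V E R" "card R = k"
    unfolding mitigating_set_def by (metis order_refl)
  then show "card S \<le> k"
    using assms(4) unfolding min_mitigating_set_def by blast
qed

lemma es_delta_le_card_mitigating_set:
  assumes "finite V" "finite E" "0 < max_degree V E" "mitigating_set V E S"
  shows "es_delta V E \<le> card S"
proof -
  obtain R where R: "min_mitigating_set V E R"
    using min_mitigating_set_exists[OF assms(1)] by blast
  then have "es_delta V E = card R"
    using assms(1-3) by (rule es_delta_eq_card_min_mitigating_set[rotated 3])
  also have "card R \<le> card S"
    using R assms(4) unfolding min_mitigating_set_def by blast
  finally show ?thesis .
qed

lemma min_mitigating_set_private_core_vertex:
  assumes "finite V" "finite E" "0 < max_degree V E" "min_mitigating_set V E S" "f \<in> S"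
  obtains z where "z \<in> core V E" "z \<in> f" "\<forall>e\<in>S - {f}. z \<notin> e"
proof -
  have SE: "S \<subseteq> E" and mit: "mitigating_set V E S"
    using assms(4) unfolding min_mitigating_set_def mitigating_set_def by auto
  note mit_iff = mitigating_set_iff_saturates_core[OF assms(1-3)]
  have "\<not> mitigating_set V E (S - {f})"
  proof
    assume "mitigating_set V E (S - {f})"
    then have "card S \<le> card (S - {f})"
      using assms(4) unfolding min_mitigating_set_def by blast
    then show False
      using card_Diff1_less[OF finite_subset[OF SE assms(2)] assms(5)] by simp
  qed
  then obtain z where z: "z \<in> core V E" "\<forall>e\<in>S - {f}. z \<notin> e"
    using mit_iff[of "S - {f}"] SE unfolding saturates_def by blast
  moreover have "z \<in> f"
    using mit mit_iff[OF SE] z unfolding saturates_def by blast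
  ultimately show ?thesis
    using that by blast
qed

lemma min_mitigating_set_exchange:
  assumes G: "simple_graph V E" "E \<noteq> {}"
    and min: "min_mitigating_set V E S"
    and M: "matching E M" "saturates M (core V E)"
    and f: "f \<in> S" "f \<notin> M" and f': "f' \<in> S" "f' \<noteq> f" "f \<inter> f' \<noteq> {}"
  shows "\<exists>S'. min_mitigating_set V E S' \<and> card (S \<inter> M) < card (S' \<inter> M)"
proof -
  have finV: "finite V" and finE: "finite E" and pos: "0 < max_degree V E"
    using G simple_graph_finite simple_graph_finite_edges max_degree_pos by blast+
  have SE: "S \<subseteq> E" and mit: "mitigating_set V E S"
    using min unfolding min_mitigating_set_def mitigating_set_def by auto
  have finS: "finite S"
    using SE finE finite_subset by blast
  note mit_iff = mitigating_set_iff_saturates_core[OF finV finE pos]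
  obtain z where z: "z \<in> core V E" "z \<in> f" "\<forall>e\<in>S - {f}. z \<notin> e"
    using min_mitigating_set_private_core_vertex[OF finV finE pos min f(1)] by blast
  obtain c where c: "c \<in> f" "c \<in> f'"
    using f'(3) by blast
  have "z \<noteq> c"
    using z(3) c(2) f' by blast
  have "card f = 2"
    using simple_graph_card_edge[OF G(1)] SE f(1) by blast
  then obtain y where "f = {c, y}"
    using c(1) by (rule card_2_other_elem)
  with \<open>z \<in> f\<close> \<open>z \<noteq> c\<close> have f_eq: "f = {c, z}"
    by blast
  obtain g where g: "g \<in> M" "z \<in> g"
    using M(2) z(1) unfolding saturates_def by blast
  have "g \<notin> S"
    using g z(3) f(2) by blast
  define S' where "S' = insert g (S - {f})"
  have S'E: "S' \<subseteq> E"
    using SE g(1) M(1) unfolding S'_def matching_def by blast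
  have "saturates S' (core V E)"
    unfolding saturates_def
  proof
    fix v
    assume "v \<in> core V E"
    then obtain e where "e \<in> S" "v \<in> e"
      using mit mit_iff[OF SE] unfolding saturates_def by blast
    then show "\<exists>e\<in>S'. v \<in> e"
      using f_eq c(2) f' g(2) unfolding S'_def by (cases "e = f") auto
  qed
  then have "mitigating_set V E S'"
    using mit_iff[OF S'E] by simp
  moreover have "card S' = card S"
    using finS f(1) \<open>g \<notin> S\<close> unfolding S'_def
    by (simp add: card_insert_if) (metis Suc_pred card_gt_0_iff empty_iff)
  ultimately have "min_mitigating_set V E S'"
    using min unfolding min_mitigating_set_def by simp
  moreover have "S' \<inter> M = insert g (S \<inter> M)"
    using g(1) f(2) unfolding S'_def by blast
  then have "card (S' \<inter> M) = Suc (card (S \<inter> M))"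
    using finS \<open>g \<notin> S\<close> by simp
  ultimately show ?thesis
    by auto
qed

lemma min_mitigating_matching_if_saturable_core:
  assumes G: "simple_graph V E" "E \<noteq> {}" and "saturable E (core V E)"
  shows "\<exists>S. min_mitigating_set V E S \<and> matching E S"
proof -
  obtain M where M: "matching E M" "saturates M (core V E)"
    using assms(3) unfolding saturable_def by blast
  have "finite M"
    using M(1) simple_graph_finite_edges[OF G(1)] unfolding matching_def by (blast intro: finite_subset)
  then have "\<forall>S. min_mitigating_set V E S \<longrightarrow> card (S \<inter> M) < Suc (card M)"
    by (simp add: card_mono le_imp_less_Suc)
  then obtain S where S: "min_mitigating_set V E S"
    and greatest: "\<forall>S'. min_mitigating_set V E S' \<longrightarrow> card (S' \<inter> M) \<le> card (S \<inter> M)"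
    using min_mitigating_set_exists[OF simple_graph_finite[OF G(1)]]
      ex_has_greatest_nat[of "min_mitigating_set V E" _ "\<lambda>S. card (S \<inter> M)" "Suc (card M)"]
    by blast
  have "pairwise disjnt S"
  proof (rule pairwiseI, rule ccontr)
    fix f f'
    assume ff': "f \<in> S" "f' \<in> S" "f \<noteq> f'" "\<not> disjnt f f'"
    have "f \<notin> M \<or> f' \<notin> M"
      using M(1) ff'(3,4) unfolding matching_iff_pairwise_disjnt pairwise_def by blast
    then obtain g g' where "g \<in> S" "g \<notin> M" "g' \<in> S" "g' \<noteq> g" "g \<inter> g' \<noteq> {}"
      using ff' unfolding disjnt_def by blast
    then show False
      using min_mitigating_set_exchange[OF G S M] greatest leD by blast
  qed
  moreover have "S \<subseteq> E"
    using S unfolding min_mitigating_set_def mitigating_set_def by simp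
  ultimately show ?thesis
    using S matching_iff_pairwise_disjnt by blast
qed

section \<open>Closed neighbourhoods of core vertices\<close>

definition boundary :: "'a set set \<Rightarrow> 'a set \<Rightarrow> 'a set" where
  "boundary E S = {u. \<exists>v\<in>S. {u, v} \<in> E} - S"

lemma closed_nbhd_eq_Un_boundary: "closed_nbhd E S = S \<union> boundary E S"
  unfolding closed_nbhd_def boundary_def by blast

lemma card_closed_nbhd:
  "finite (closed_nbhd E S) \<Longrightarrow> card (closed_nbhd E S) = card S + card (boundary E S)"
  unfolding closed_nbhd_eq_Un_boundary by (subst card_Un_disjoint) (auto simp: boundary_def)

lemma closed_nbhd_subset: "simple_graph V E \<Longrightarrow> S \<subseteq> V \<Longrightarrow> closed_nbhd E S \<subseteq> V"
  unfolding closed_nbhd_def simple_graph_def by blast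

lemma simple_graph_induced_edges: "simple_graph V E \<Longrightarrow> X \<subseteq> V \<Longrightarrow> simple_graph X (induced_edges E X)"
  unfolding simple_graph_def induced_edges_def by (blast intro: finite_subset)

lemma induced_edges_subset: "induced_edges E X \<subseteq> E"
  unfolding induced_edges_def by blast

lemma edge_at_mem_induced_closed_nbhd:
  assumes "simple_graph V E" "v \<in> S" "e \<in> E" "v \<in> e"
  shows "e \<in> induced_edges E (closed_nbhd E S)"
proof -
  obtain u where "e = {v, u}"
    using simple_graph_card_edge[OF assms(1,3)] assms(4) by (rule card_2_other_elem)
  then show ?thesis
    using assms(2,3) unfolding induced_edges_def closed_nbhd_def by (auto simp: insert_commute)
qed

lemma degree_induced_closed_nbhd:
  assumes "simple_graph V E" "v \<in> S"
  shows "degree (induced_edges E (closed_nbhd E S)) v = degree E v"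
proof -
  have "{e \<in> induced_edges E (closed_nbhd E S). v \<in> e} = {e \<in> E. v \<in> e}"
    using edge_at_mem_induced_closed_nbhd[OF assms] induced_edges_subset by blast
  then show ?thesis
    unfolding degree_def by simp
qed

lemma max_degree_induced_closed_nbhd:
  assumes G: "simple_graph V E" and S: "S \<subseteq> core V E" "S \<noteq> {}"
  shows "max_degree (closed_nbhd E S) (induced_edges E (closed_nbhd E S)) = max_degree V E"
proof (rule antisym)
  have "S \<subseteq> V"
    using S(1) unfolding core_def by blast
  with G have NV: "closed_nbhd E S \<subseteq> V"
    by (rule closed_nbhd_subset)
  then have finN: "finite (closed_nbhd E S)"
    using G simple_graph_finite finite_subset by blast
  show "max_degree (closed_nbhd E S) (induced_edges E (closed_nbhd E S)) \<le> max_degree V E"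
  proof (rule max_degree_leI[OF finN])
    fix v
    assume "v \<in> closed_nbhd E S"
    have "degree (induced_edges E (closed_nbhd E S)) v \<le> degree E v"
      using simple_graph_finite_edges[OF G] induced_edges_subset by (rule degree_mono)
    also have "\<dots> \<le> max_degree V E"
      using simple_graph_finite[OF G] \<open>v \<in> closed_nbhd E S\<close> NV by (blast intro: degree_le_max_degree)
    finally show "degree (induced_edges E (closed_nbhd E S)) v \<le> max_degree V E" .
  qed
  obtain s where "s \<in> S"
    using S(2) by blast
  then have "max_degree V E = degree (induced_edges E (closed_nbhd E S)) s"
    using S(1) degree_induced_closed_nbhd[OF G] unfolding core_def by auto
  also have "\<dots> \<le> max_degree (closed_nbhd E S) (induced_edges E (closed_nbhd E S))"
    using finN \<open>s \<in> S\<close> by (intro degree_le_max_degree) (auto simp: closed_nbhd_def)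
  finally show "max_degree V E \<le> max_degree (closed_nbhd E S) (induced_edges E (closed_nbhd E S))" .
qed

lemma core_induced_closed_nbhd:
  assumes G: "simple_graph V E" and S: "S \<subseteq> core V E"
  shows "S \<subseteq> core (closed_nbhd E S) (induced_edges E (closed_nbhd E S))"
proof
  fix s
  assume "s \<in> S"
  then have "S \<noteq> {}"
    by blast
  have "degree (induced_edges E (closed_nbhd E S)) s = max_degree V E"
    using degree_induced_closed_nbhd[OF G \<open>s \<in> S\<close>] S \<open>s \<in> S\<close> unfolding core_def by auto
  also have "\<dots> = max_degree (closed_nbhd E S) (induced_edges E (closed_nbhd E S))"
    using max_degree_induced_closed_nbhd[OF G S \<open>S \<noteq> {}\<close>] by simp
  finally show "s \<in> core (closed_nbhd E S) (induced_edges E (closed_nbhd E S))"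
    using \<open>s \<in> S\<close> unfolding core_def closed_nbhd_def by simp
qed

lemma core_subgraph_same_max_degree:
  assumes "finite V" "finite E" "X \<subseteq> V" "F \<subseteq> E" "max_degree X F = max_degree V E"
    and "v \<in> core X F"
  shows "v \<in> core V E" "{e \<in> F. v \<in> e} = {e \<in> E. v \<in> e}"
proof -
  have "v \<in> V" and dv: "degree F v = max_degree V E"
    using assms(3,5,6) unfolding core_def by auto
  have "degree F v \<le> degree E v"
    using assms(2,4) by (rule degree_mono)
  moreover have "degree E v \<le> max_degree V E"
    using assms(1) \<open>v \<in> V\<close> by (rule degree_le_max_degree)
  ultimately have "degree F v = degree E v"
    using dv by simp
  then show "v \<in> core V E"
    using \<open>v \<in> V\<close> dv unfolding core_def by simp
  show "{e \<in> F. v \<in> e} = {e \<in> E. v \<in> e}"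
    using \<open>degree F v = degree E v\<close> assms(2,4) unfolding degree_def
    by (intro card_subset_eq) auto
qed

lemma es_delta_closed_nbhd_le_if_saturable_core:
  assumes G: "simple_graph V E" "E \<noteq> {}" and "saturable E (core V E)" and S: "S \<subseteq> core V E"
  shows "2 * es_delta (closed_nbhd E S) (induced_edges E (closed_nbhd E S)) \<le> card (closed_nbhd E S)"
proof (cases "S = {}")
  case True
  then show ?thesis
    unfolding es_delta_def closed_nbhd_def max_degree_def
    by (simp, intro Least_eq_0 exI[of _ "{}"]) simp
next
  case False
  define N where "N = closed_nbhd E S"
  define H where "H = induced_edges E N"
  obtain M where M: "matching E M" "saturates M (core V E)"
    using assms(3) unfolding saturable_def by blast
  have finV: "finite V" and finE: "finite E"
    using G simple_graph_finite simple_graph_finite_edges by blast+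
  have "S \<subseteq> V"
    using S unfolding core_def by blast
  with G(1) have NV: "N \<subseteq> V"
    unfolding N_def by (rule closed_nbhd_subset)
  then have GH: "simple_graph N H"
    unfolding H_def using G(1) by (rule simple_graph_induced_edges[rotated])
  have HE: "H \<subseteq> E"
    unfolding H_def by (rule induced_edges_subset)
  have DH: "max_degree N H = max_degree V E"
    unfolding N_def H_def using G(1) S False by (rule max_degree_induced_closed_nbhd)
  have pos: "0 < max_degree N H"
    using DH max_degree_pos[OF G] by simp
  define MH where "MH = M \<inter> H"
  have "saturates MH (core N H)"
    unfolding saturates_def
  proof
    fix v
    assume v: "v \<in> core N H"
    note core_sub = core_subgraph_same_max_degree[OF finV finE NV HE DH v]
    obtain e where "e \<in> M" "v \<in> e"
      using M(2) core_sub(1) unfolding saturates_def by blast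
    moreover have "e \<in> H"
      using core_sub(2) \<open>e \<in> M\<close> \<open>v \<in> e\<close> M(1) unfolding matching_def by blast
    ultimately show "\<exists>e\<in>MH. v \<in> e"
      unfolding MH_def by blast
  qed
  then have "mitigating_set N H MH"
    using mitigating_set_iff_saturates_core[OF simple_graph_finite[OF GH]
        simple_graph_finite_edges[OF GH] pos, of MH]
    unfolding MH_def by blast
  then have "es_delta N H \<le> card MH"
    using es_delta_le_card_mitigating_set[OF simple_graph_finite[OF GH]
        simple_graph_finite_edges[OF GH] pos] by blast
  also have "2 * card MH = card (\<Union>MH)"
    using M(1) simple_graph_card_edge[OF G(1)]
    by (intro card_Union_pairwise_disjnt_edges[symmetric])
      (auto simp: MH_def matching_iff_pairwise_disjnt intro: pairwise_subset)
  also have "\<dots> \<le> card N"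
    using simple_graph_finite[OF GH] by (rule card_mono) (auto simp: MH_def H_def induced_edges_def)
  finally show ?thesis
    unfolding N_def H_def by linarith
qed

text \<open>A matching inside \<open>S\<close> built greedily from a cover: every edge of the cover contributes
  either a matching edge with both ends in \<open>S\<close> or at most one vertex of \<open>S\<close>.\<close>

lemma matching_inside_covered_set:
  assumes "finite R" "R \<subseteq> E" "\<forall>e\<in>R. card e = 2" "finite S" "saturates R S"
  shows "\<exists>N. matching E N \<and> \<Union>N \<subseteq> S \<and> card S \<le> card R + card N"
  using assms
proof (induction R arbitrary: S rule: finite_induct)
  case empty
  then have "S = {}"
    unfolding saturates_def by blast
  then show ?case
    unfolding matching_def by auto
next
  case (insert e R)
  have "\<exists>N. matching E N \<and> \<Union>N \<subseteq> S - e \<and> card (S - e) \<le> card R + card N"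
    using insert.prems by (intro insert.IH) (auto simp: saturates_def)
  then obtain N where N: "matching E N" "\<Union>N \<subseteq> S - e" "card (S - e) \<le> card R + card N"
    by blast
  have "card e = 2" "e \<in> E"
    using insert.prems by auto
  then have "finite e"
    by (intro card_ge_0_finite) simp
  have cardS: "card S = card (S \<inter> e) + card (S - e)"
    using insert.prems(3) by (rule card_Int_Diff)
  have "finite N"
    using N(2) insert.prems(3) by (meson finite_Diff finite_UnionD finite_subset)
  have cardR: "card (insert e R) = Suc (card R)"
    using insert.hyps by simp
  show ?case
  proof (cases "e \<subseteq> S")
    case True
    have "e \<notin> N"
    proof
      assume "e \<in> N"
      then have "e = {}"
        using N(2) by blast
      with \<open>card e = 2\<close> show False
        by simp
    qed
    then have "card (insert e N) = Suc (card N)"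
      using \<open>finite N\<close> by simp
    moreover have "card (S \<inter> e) = 2"
      using True \<open>card e = 2\<close> by (simp add: Int_absorb1)
    moreover have "matching E (insert e N)"
      using N(1,2) \<open>e \<in> E\<close> by (intro matching_insert) auto
    ultimately show ?thesis
      using True N(2,3) cardS cardR by (intro exI[of _ "insert e N"]) auto
  next
    case False
    then have "S \<inter> e \<subset> e"
      by blast
    then have "card (S \<inter> e) < 2"
      using \<open>finite e\<close> \<open>card e = 2\<close> psubset_card_mono by metis
    then show ?thesis
      using N cardS cardR by (intro exI[of _ N]) auto
  qed
qed

definition deficiency_condition :: "'a set set \<Rightarrow> 'a set \<Rightarrow> bool" where
  "deficiency_condition E X \<longleftrightarrow>
     (\<forall>S\<subseteq>X. \<exists>N. matching E N \<and> \<Union>N \<subseteq> S \<and> card S \<le> 2 * card N + card (boundary E S))"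

lemma deficiency_condition_core_if_es_delta_closed_nbhd_le:
  assumes G: "simple_graph V E" "E \<noteq> {}"
    and es: "\<And>S. S \<subseteq> core V E \<Longrightarrow>
      2 * es_delta (closed_nbhd E S) (induced_edges E (closed_nbhd E S)) \<le> card (closed_nbhd E S)"
  shows "deficiency_condition E (core V E)"
  unfolding deficiency_condition_def
proof (intro allI impI)
  fix S
  assume S: "S \<subseteq> core V E"
  show "\<exists>N. matching E N \<and> \<Union>N \<subseteq> S \<and> card S \<le> 2 * card N + card (boundary E S)"
  proof (cases "S = {}")
    case True
    then show ?thesis
      unfolding matching_def by auto
  next
    case False
    define N where "N = closed_nbhd E S"
    define H where "H = induced_edges E N"
    have "S \<subseteq> V"
      using S unfolding core_def by blast
    with G(1) have NV: "N \<subseteq> V"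
      unfolding N_def by (rule closed_nbhd_subset)
    then have GH: "simple_graph N H"
      unfolding H_def using G(1) by (rule simple_graph_induced_edges[rotated])
    have finN: "finite N" and finH: "finite H"
      using GH simple_graph_finite simple_graph_finite_edges by blast+
    have DH: "max_degree N H = max_degree V E"
      unfolding N_def H_def using G(1) S False by (rule max_degree_induced_closed_nbhd)
    have pos: "0 < max_degree N H"
      using DH max_degree_pos[OF G] by simp
    obtain R where R: "min_mitigating_set N H R"
      using min_mitigating_set_exists[OF finN] by blast
    then have RH: "R \<subseteq> H" and "saturates R (core N H)"
      using mitigating_set_iff_saturates_core[OF finN finH pos]
      unfolding min_mitigating_set_def mitigating_set_def by auto
    moreover have "S \<subseteq> core N H"
      unfolding N_def H_def using G(1) S by (rule core_induced_closed_nbhd)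
    ultimately have covS: "saturates R S"
      unfolding saturates_def by blast
    have "finite R" "R \<subseteq> E" "\<forall>e\<in>R. card e = 2"
      using RH finH simple_graph_card_edge[OF GH] induced_edges_subset[of E N]
      unfolding H_def by (auto intro: finite_subset)
    moreover have "finite S"
      using finN unfolding N_def closed_nbhd_eq_Un_boundary by simp
    ultimately obtain M where M: "matching E M" "\<Union>M \<subseteq> S" "card S \<le> card R + card M"
      using matching_inside_covered_set covS by blast
    have "2 * card R \<le> card S + card (boundary E S)"
      using es[OF S] es_delta_eq_card_min_mitigating_set[OF finN finH pos R]
        card_closed_nbhd[of E S] finN
      unfolding N_def H_def by simp
    with M show ?thesis
      by (intro exI[of _ M]) auto
  qed
qed

section \<open>Saturating matchings under the deficiency condition\<close>

lemma deficiency_condition_mono: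
  assumes "deficiency_condition E X" "E \<subseteq> E'" "simple_graph V E'"
  shows "deficiency_condition E' X"
  unfolding deficiency_condition_def
proof (intro allI impI)
  fix S
  assume "S \<subseteq> X"
  then obtain N where N: "matching E N" "\<Union>N \<subseteq> S" "card S \<le> 2 * card N + card (boundary E S)"
    using assms(1) unfolding deficiency_condition_def by blast
  have "boundary E' S \<subseteq> V"
    using assms(3) unfolding boundary_def simple_graph_def by blast
  then have "finite (boundary E' S)"
    using simple_graph_finite[OF assms(3)] by (rule finite_subset)
  moreover have "boundary E S \<subseteq> boundary E' S"
    using assms(2) unfolding boundary_def by blast
  ultimately have "card (boundary E S) \<le> card (boundary E' S)"
    by (rule card_mono)
  moreover have "matching E' N"
    using N(1) assms(2) unfolding matching_def by blast
  ultimately show "\<exists>N. matching E' N \<and> \<Union>N \<subseteq> S \<and> card S \<le> 2 * card N + card (boundary E' S)"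
    using N by force
qed

lemma even_card_if_deficiency_condition_all:
  assumes G: "simple_graph V E" and "deficiency_condition E V"
  shows "even (card V)"
proof -
  obtain N where N: "matching E N" "\<Union>N \<subseteq> V" "card V \<le> 2 * card N + card (boundary E V)"
    using assms(2) unfolding deficiency_condition_def by blast
  have "boundary E V = {}"
    using G unfolding boundary_def simple_graph_def by blast
  moreover have "2 * card N = card (\<Union>N)"
    using N(1) simple_graph_card_edge[OF G]
    by (intro card_Union_pairwise_disjnt_edges[symmetric]) (auto simp: matching_iff_pairwise_disjnt)
  moreover have "card (\<Union>N) \<le> card V"
    using N(2) simple_graph_finite[OF G] by (rule card_mono[rotated])
  ultimately have "card V = 2 * card N"
    using N(3) by simp
  then show ?thesis
    by simp
qed

definition clique :: "'a set set \<Rightarrow> 'a set \<Rightarrow> bool" where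
  "clique E P \<longleftrightarrow> (\<forall>u\<in>P. \<forall>v\<in>P. u \<noteq> v \<longrightarrow> {u, v} \<in> E)"

lemma clique_subset: "clique E P \<Longrightarrow> Q \<subseteq> P \<Longrightarrow> clique E Q"
  unfolding clique_def by blast

lemma clique_Un_universal:
  assumes "clique E P" "\<And>u v. u \<in> Z \<Longrightarrow> v \<in> P \<union> Z \<Longrightarrow> v \<noteq> u \<Longrightarrow> {u, v} \<in> E"
  shows "clique E (P \<union> Z)"
  unfolding clique_def
proof (intro ballI impI)
  fix u v
  assume uv: "u \<in> P \<union> Z" "v \<in> P \<union> Z" "u \<noteq> v"
  consider "u \<in> Z" | "v \<in> Z" | "u \<in> P" "v \<in> P"
    using uv by blast
  then show "{u, v} \<in> E"
  proof cases
    case 2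
    then have "{v, u} \<in> E"
      using assms(2) uv by blast
    then show ?thesis
      by (simp add: insert_commute)
  qed (use assms uv in \<open>auto simp: clique_def\<close>)
qed

lemma clique_perfect_matching:
  assumes "finite P" "clique E P" "card P = 2 * n"
  shows "\<exists>N. matching E N \<and> \<Union>N = P"
  using assms
proof (induction n arbitrary: P)
  case 0
  then show ?case
    unfolding matching_def by auto
next
  case (Suc n)
  then have "2 \<le> card P"
    by simp
  then obtain T where "T \<subseteq> P" "card T = 2"
    by (rule obtain_subset_with_card_n)
  then obtain u v where uv: "u \<in> P" "v \<in> P" "u \<noteq> v"
    by (auto simp: card_2_iff)
  have "card (P - {u, v}) = 2 * n"
    using Suc.prems(1,3) uv by (simp add: card_Diff_subset)
  moreover have "finite (P - {u, v})"
    using Suc.prems(1) by simp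
  moreover have "clique E (P - {u, v})"
    using Suc.prems(2) by (rule clique_subset) blast
  ultimately obtain N where N: "matching E N" "\<Union>N = P - {u, v}"
    using Suc.IH[of "P - {u, v}"] by blast
  have "matching E (insert {u, v} N)"
    using N Suc.prems(2) uv unfolding clique_def by (intro matching_insert) auto
  moreover have "\<Union>(insert {u, v} N) = P"
    using N(2) uv by auto
  ultimately show ?case
    by blast
qed

lemma clique_matching_covering:
  assumes "finite P" "clique E P" "even (card P) \<or> \<not> P \<subseteq> X"
  shows "\<exists>N. matching E N \<and> \<Union>N \<subseteq> P \<and> P \<inter> X \<subseteq> \<Union>N"
proof (cases "even (card P)")
  case True
  then obtain n where "card P = 2 * n"
    by (elim evenE)
  then obtain N where "matching E N" "\<Union>N = P"
    using clique_perfect_matching[OF assms(1,2)] by blast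
  then show ?thesis
    by blast
next
  case False
  then obtain y where y: "y \<in> P" "y \<notin> X"
    using assms(3) by blast
  moreover have "card P = Suc (card (P - {y}))"
    using assms(1) y(1) by (rule card_Suc_Diff1[symmetric])
  ultimately have "even (card (P - {y}))"
    using False by simp
  then obtain n where "card (P - {y}) = 2 * n"
    by (elim evenE)
  moreover have "finite (P - {y})"
    using assms(1) by simp
  moreover have "clique E (P - {y})"
    using assms(2) by (rule clique_subset) blast
  ultimately obtain N where "matching E N" "\<Union>N = P - {y}"
    using clique_perfect_matching[of "P - {y}" E] by blast
  then show ?thesis
    using y by blast
qed

lemma matching_UN_in_disjoint_parts:
  assumes "pairwise disjnt \<P>" "\<forall>P\<in>\<P>. matching E (N P) \<and> \<Union>(N P) \<subseteq> P"
  shows "matching E (\<Union>P\<in>\<P>. N P)"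
  unfolding matching_iff_pairwise_disjnt
proof
  show "(\<Union>P\<in>\<P>. N P) \<subseteq> E"
    using assms(2) unfolding matching_def by blast
  show "pairwise disjnt (\<Union>P\<in>\<P>. N P)"
  proof (rule pairwiseI)
    fix e e'
    assume "e \<in> (\<Union>P\<in>\<P>. N P)" "e' \<in> (\<Union>P\<in>\<P>. N P)" "e \<noteq> e'"
    then obtain P P' where P: "P \<in> \<P>" "P' \<in> \<P>" "e \<in> N P" "e' \<in> N P'"
      by blast
    show "disjnt e e'"
    proof (cases "P = P'")
      case True
      have "pairwise disjnt (N P)"
        using assms(2) P(1) by (simp add: matching_iff_pairwise_disjnt)
      then show ?thesis
        using True P(3,4) \<open>e \<noteq> e'\<close> by (simp add: pairwise_def)
    next
      case False
      then have "disjnt P P'"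
        using assms(1) P(1,2) by (simp add: pairwise_def)
      moreover have "e \<subseteq> P" "e' \<subseteq> P'"
        using assms(2) P by blast+
      ultimately show ?thesis
        unfolding disjnt_def by blast
    qed
  qed
qed

lemma saturable_if_clique_partition:
  assumes "\<forall>P\<in>\<P>. finite P \<and> clique E P \<and> (even (card P) \<or> \<not> P \<subseteq> X)"
    and "pairwise disjnt \<P>" "X \<subseteq> \<Union>\<P>"
  shows "saturable E X"
proof -
  have "\<forall>P\<in>\<P>. \<exists>N. matching E N \<and> \<Union>N \<subseteq> P \<and> P \<inter> X \<subseteq> \<Union>N"
  proof
    fix P
    assume "P \<in> \<P>"
    with assms(1) have "finite P" "clique E P" "even (card P) \<or> \<not> P \<subseteq> X"
      by auto
    then show "\<exists>N. matching E N \<and> \<Union>N \<subseteq> P \<and> P \<inter> X \<subseteq> \<Union>N"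
      by (rule clique_matching_covering)
  qed
  then have "\<exists>N. \<forall>P\<in>\<P>. matching E (N P) \<and> \<Union>(N P) \<subseteq> P \<and> P \<inter> X \<subseteq> \<Union>(N P)"
    by (rule bchoice)
  then obtain N where N: "\<forall>P\<in>\<P>. matching E (N P) \<and> \<Union>(N P) \<subseteq> P \<and> P \<inter> X \<subseteq> \<Union>(N P)"
    by blast
  then have "matching E (\<Union>P\<in>\<P>. N P)"
    using assms(2) by (intro matching_UN_in_disjoint_parts) auto
  moreover have "saturates (\<Union>P\<in>\<P>. N P) X"
    unfolding saturates_def
  proof
    fix v
    assume "v \<in> X"
    then obtain P where "P \<in> \<P>" "v \<in> P"
      using assms(3) by blast
    then have "v \<in> \<Union>(N P)"
      using N \<open>v \<in> X\<close> by blast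
    then show "\<exists>e\<in>(\<Union>P\<in>\<P>. N P). v \<in> e"
      using \<open>P \<in> \<P>\<close> by blast
  qed
  ultimately show ?thesis
    unfolding saturable_def by blast
qed

subsection \<open>Components of graphs of maximum degree two\<close>

definition adj :: "'a set set \<Rightarrow> ('a \<times> 'a) set" where
  "adj F = {(u, v). {u, v} \<in> F}"

definition component :: "'a set set \<Rightarrow> 'a \<Rightarrow> 'a set" where
  "component F v = (adj F)\<^sup>* `` {v}"

definition component_edges :: "'a set set \<Rightarrow> 'a \<Rightarrow> 'a set set" where
  "component_edges F v = {e \<in> F. e \<subseteq> component F v}"

lemma sym_adj: "sym (adj F)"
proof (rule symI)
  fix u v
  assume "(u, v) \<in> adj F"
  then have "{u, v} \<in> F"
    unfolding adj_def by simp
  then have "{v, u} \<in> F"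
    by (metis insert_commute)
  then show "(v, u) \<in> adj F"
    unfolding adj_def by simp
qed

lemma component_self: "v \<in> component F v"
  unfolding component_def by simp

lemma component_sym: "x \<in> component F z \<Longrightarrow> z \<in> component F x"
  using symD[OF sym_rtrancl[OF sym_adj]] unfolding component_def by simp

lemma component_eq:
  assumes "x \<in> component F z"
  shows "component F x = component F z"
proof -
  have "(z, x) \<in> (adj F)\<^sup>*" "(x, z) \<in> (adj F)\<^sup>*"
    using assms component_sym[OF assms] unfolding component_def by simp_all
  then show ?thesis
    unfolding component_def by (auto intro: rtrancl_trans)
qed

lemma component_edges_subset: "component_edges F v \<subseteq> F"
  unfolding component_edges_def by blast

lemma component_edges_vertex: "e \<in> component_edges F z \<Longrightarrow> v \<in> e \<Longrightarrow> v \<in> component F z"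
  unfolding component_edges_def by blast

lemma mem_component_edges:
  assumes "card e = 2" "e \<in> F" "v \<in> e" "v \<in> component F z"
  shows "e \<in> component_edges F z"
proof -
  obtain w where w: "e = {v, w}"
    using assms(1,3) by (rule card_2_other_elem)
  then have "(v, w) \<in> adj F"
    using assms(2) unfolding adj_def by simp
  then have "w \<in> component F z"
    using assms(4) unfolding component_def by (blast intro: rtrancl_into_rtrancl)
  then show ?thesis
    using assms(2,4) w unfolding component_edges_def by simp
qed

lemma component_edges_touch:
  assumes "x \<in> component F z" "x \<noteq> z"
  shows "\<exists>e\<in>component_edges F z. x \<in> e"
proof -
  obtain w where w: "(z, w) \<in> (adj F)\<^sup>*" "(w, x) \<in> adj F"
    using assms unfolding component_def by (auto elim: rtranclE)
  then have "{w, x} \<in> F" "w \<in> component F z"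
    unfolding adj_def component_def by auto
  moreover have "x \<in> component F z"
    using assms(1) .
  ultimately have "{w, x} \<in> component_edges F z"
    unfolding component_edges_def by blast
  then show ?thesis
    by blast
qed

lemma component_subset: "component F v \<subseteq> insert v (\<Union>F)"
proof
  fix w
  assume "w \<in> component F v"
  then have "(v, w) \<in> (adj F)\<^sup>*"
    unfolding component_def by simp
  then show "w \<in> insert v (\<Union>F)"
    by (induction rule: rtrancl_induct) (auto simp: adj_def)
qed

lemma finite_component:
  assumes "finite F" "\<forall>e\<in>F. card e = 2"
  shows "finite (component F v)"
proof -
  have "finite e" if "e \<in> F" for e
    using assms(2) that card.infinite by fastforce
  then have "finite (insert v (\<Union>F))"
    using assms(1) by simp
  then show ?thesis
    using component_subset by (rule finite_subset[rotated])
qed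

lemma component_degree_0:
  assumes "finite F" "degree F v = 0"
  shows "component F v = {v}"
proof -
  have no_edge: "\<forall>e\<in>F. v \<notin> e"
    using assms unfolding degree_def by simp
  have "w = v" if "(v, w) \<in> (adj F)\<^sup>*" for w
    by (rule converse_rtranclE[OF that]) (use no_edge in \<open>auto simp: adj_def\<close>)
  then show ?thesis
    unfolding component_def by auto
qed

lemma degree_Diff_edge:
  assumes "finite F" "e \<in> F"
  shows "v \<in> e \<Longrightarrow> degree (F - {e}) v = degree F v - 1"
    and "v \<notin> e \<Longrightarrow> degree (F - {e}) v = degree F v"
proof -
  assume "v \<in> e"
  then have "{f \<in> F - {e}. v \<in> f} = {f \<in> F. v \<in> f} - {e}"
    by blast
  then show "degree (F - {e}) v = degree F v - 1"
    unfolding degree_def using assms \<open>v \<in> e\<close> by (simp add: card_Diff_singleton)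
next
  assume "v \<notin> e"
  then have "{f \<in> F - {e}. v \<in> f} = {f \<in> F. v \<in> f}"
    by blast
  then show "degree (F - {e}) v = degree F v"
    unfolding degree_def by simp
qed

lemma component_remove_pendant_edge:
  assumes "{e \<in> F. v \<in> e} = {{v, v'}}"
  shows "component F v \<subseteq> insert v (component (F - {{v, v'}}) v')"
proof
  fix w
  assume "w \<in> component F v"
  then have "(v, w) \<in> (adj F)\<^sup>*"
    unfolding component_def by simp
  then show "w \<in> insert v (component (F - {{v, v'}}) v')"
  proof (induction rule: rtrancl_induct)
    case base
    then show ?case
      by simp
  next
    case (step y z)
    then have yz: "{y, z} \<in> F"
      unfolding adj_def by simp
    show ?case
    proof (cases "{y, z} = {v, v'}")
      case True
      then have "z = v \<or> z = v'"
        by (auto simp: doubleton_eq_iff)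
      then show ?thesis
        using component_self[of v' "F - {{v, v'}}"] by blast
    next
      case False
      have "y \<noteq> v"
      proof
        assume "y = v"
        then have "{y, z} \<in> {e \<in> F. v \<in> e}"
          using yz by simp
        with assms False show False
          by simp
      qed
      then have "(v', y) \<in> (adj (F - {{v, v'}}))\<^sup>*"
        using step.IH unfolding component_def by simp
      moreover have "(y, z) \<in> adj (F - {{v, v'}})"
        using yz False unfolding adj_def by simp
      ultimately have "(v', z) \<in> (adj (F - {{v, v'}}))\<^sup>*"
        by (rule rtrancl_into_rtrancl)
      then show ?thesis
        unfolding component_def by simp
    qed
  qed
qed

lemma low_degree_in_component_remove_pendant_edge:
  assumes "finite F" "{f \<in> F. v \<in> f} = {{v, v'}}"
  shows "{w \<in> component F v. degree F w \<le> 1}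
    \<subseteq> {v, v'} \<union> {w \<in> component (F - {{v, v'}}) v'. degree (F - {{v, v'}}) w \<le> 1}"
proof
  fix w
  assume w: "w \<in> {w \<in> component F v. degree F w \<le> 1}"
  show "w \<in> {v, v'} \<union> {w \<in> component (F - {{v, v'}}) v'. degree (F - {{v, v'}}) w \<le> 1}"
  proof (cases "w \<in> {v, v'}")
    case False
    have "{v, v'} \<in> F"
      using assms(2) by blast
    then have "degree (F - {{v, v'}}) w = degree F w"
      using degree_Diff_edge(2)[OF assms(1)] False by blast
    moreover have "w \<in> component (F - {{v, v'}}) v'"
      using w False component_remove_pendant_edge[OF assms(2)] by blast
    ultimately show ?thesis
      using w by simp
  qed auto
qed

text \<open>In a graph of maximum degree two every component is a path or a cycle, so a component
  through a vertex of degree at most one has at most two such vertices: the ends of the path.\<close>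

lemma card_low_degree_in_component:
  assumes "finite F" "\<forall>e\<in>F. card e = 2" "\<forall>w. degree F w \<le> 2" "degree F v \<le> 1"
  shows "card {w \<in> component F v. degree F w \<le> 1} \<le> 2"
  using assms
proof (induction "card F" arbitrary: F v rule: less_induct)
  case less
  define L where "L = {w \<in> component F v. degree F w \<le> 1}"
  show ?case
  proof (cases "degree F v = 0")
    case True
    then have "L \<subseteq> {v}"
      unfolding L_def using component_degree_0[OF less.prems(1)] by blast
    then show ?thesis
      unfolding L_def[symmetric] using card_mono[of "{v}" L] by simp
  next
    case False
    then have "degree F v = 1"
      using less.prems(4) by simp
    then obtain e where e: "{f \<in> F. v \<in> f} = {e}"
      unfolding degree_def by (rule card_1_singletonE)
    then have "e \<in> F" "v \<in> e"
      by auto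
    then have "card e = 2"
      using less.prems(2) by blast
    then obtain v' where "v' \<noteq> v" and e_eq: "e = {v, v'}"
      using \<open>v \<in> e\<close> by (rule card_2_other_elem)
    define F' where "F' = F - {e}"
    define L' where "L' = {w \<in> component F' v'. degree F' w \<le> 1}"
    have L_sub: "L \<subseteq> {v, v'} \<union> L'"
      unfolding L_def L'_def F'_def e_eq
      using less.prems(1) by (rule low_degree_in_component_remove_pendant_edge) (use e e_eq in simp)
    have degF'_v': "degree F' v' = degree F v' - 1"
      unfolding F'_def using degree_Diff_edge(1)[OF less.prems(1) \<open>e \<in> F\<close>] e_eq by simp
    show ?thesis
    proof (cases "degree F v' \<le> 1")
      case True
      then have "component F' v' = {v'}"
        using degF'_v' less.prems(1) unfolding F'_def by (intro component_degree_0) auto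
      then have "L \<subseteq> {v, v'}"
        using L_sub unfolding L'_def by blast
      then show ?thesis
        unfolding L_def[symmetric] using card_mono[of "{v, v'}" L] \<open>v' \<noteq> v\<close> by simp
    next
      case False
      moreover have "degree F v' \<le> 2"
        using less.prems(3) by blast
      ultimately have "degree F v' = 2" "degree F' v' = 1"
        using degF'_v' by linarith+
      have "finite F'" "\<forall>e\<in>F'. card e = 2"
        unfolding F'_def using less.prems(1,2) by auto
      moreover have "card F' < card F"
        unfolding F'_def using less.prems(1) \<open>e \<in> F\<close> by (rule card_Diff1_less)
      moreover have "\<forall>w. degree F' w \<le> 2"
        using less.prems(1,3) degree_mono[of F F'] unfolding F'_def by (meson Diff_subset le_trans)
      ultimately have "card L' \<le> 2"
        unfolding L'_def using less.hyps \<open>degree F' v' = 1\<close> by simp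
      have "finite L'" "v' \<in> L'"
        unfolding L'_def using finite_component[OF \<open>finite F'\<close> \<open>\<forall>e\<in>F'. card e = 2\<close>]
          \<open>degree F' v' = 1\<close> component_self by simp_all
      have "L \<subseteq> insert v (L' - {v'})"
        using L_sub \<open>degree F v' = 2\<close> unfolding L_def by auto
      then have "card L \<le> card (insert v (L' - {v'}))"
        using \<open>finite L'\<close> by (intro card_mono) simp_all
      also have "\<dots> \<le> Suc (card (L' - {v'}))"
        using \<open>finite L'\<close> by (simp add: card_insert_if)
      also have "\<dots> = card L'"
        using \<open>finite L'\<close> \<open>v' \<in> L'\<close> by (rule card_Suc_Diff1)
      finally show ?thesis
        unfolding L_def using \<open>card L' \<le> 2\<close> by simp
    qed
  qed
qed

lemma component_no_three_low_degree:
  assumes "finite F" "\<forall>e\<in>F. card e = 2" "\<forall>w. degree F w \<le> 2"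
    and "x \<in> component F z" "y \<in> component F z"
    and "degree F x \<le> 1" "degree F y \<le> 1" "degree F z \<le> 1"
    and "x \<noteq> y" "x \<noteq> z" "y \<noteq> z"
  shows False
proof -
  have "{x, y, z} \<subseteq> {w \<in> component F z. degree F w \<le> 1}"
    using assms(4-8) component_self[of z F] by blast
  then have "card {x, y, z} \<le> card {w \<in> component F z. degree F w \<le> 1}"
    using finite_component[OF assms(1,2)] by (intro card_mono) simp_all
  then have "card {x, y, z} \<le> 2"
    using card_low_degree_in_component[OF assms(1-3,8)] by linarith
  then show False
    using assms(9-11) by simp
qed

subsection \<open>Exchanging edges between two saturating matchings\<close>

lemma pairwise_disjnt_UnI:
  assumes "pairwise disjnt A" "pairwise disjnt B"
    and "\<And>a b v. a \<in> A \<Longrightarrow> b \<in> B \<Longrightarrow> v \<in> a \<Longrightarrow> v \<in> b \<Longrightarrow> False"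
  shows "pairwise disjnt (A \<union> B)"
proof (rule pairwiseI)
  fix e e'
  assume e: "e \<in> A \<union> B" "e' \<in> A \<union> B" "e \<noteq> e'"
  show "disjnt e e'"
  proof (cases "e \<in> A \<longleftrightarrow> e' \<in> A")
    case True
    then show ?thesis
      using assms(1,2) e unfolding pairwise_def by blast
  next
    case False
    then show ?thesis
      using assms(3) e unfolding disjnt_def by blast
  qed
qed

lemma swap_closed:
  assumes P: "pairwise disjnt P" and Q: "pairwise disjnt Q"
    and sat: "saturates P X" "saturates Q X"
    and R: "R \<subseteq> sym_diff P Q"
    and closed: "\<And>v e. e \<in> sym_diff P Q \<Longrightarrow> v \<in> e \<Longrightarrow> v \<in> \<Union>R \<Longrightarrow> e \<in> R"
  shows "pairwise disjnt ((P - R) \<union> (Q \<inter> R))" "saturates ((P - R) \<union> (Q \<inter> R)) X"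
proof -
  note P_unique = pairwise_disjnt_edge_unique[OF P]
  note Q_unique = pairwise_disjnt_edge_unique[OF Q]
  have cross: False if "a \<in> P - R" "b \<in> Q \<inter> R" "v \<in> a" "v \<in> b" for a b v
  proof -
    have "a \<notin> sym_diff P Q"
      using closed[of a v] that by blast
    then have "a \<in> Q"
      using that(1) by blast
    then have "a = b"
      using Q_unique that by blast
    with that show False
      by blast
  qed
  show "pairwise disjnt ((P - R) \<union> (Q \<inter> R))"
    using P Q cross by (intro pairwise_disjnt_UnI) (auto intro: pairwise_subset)
  show "saturates ((P - R) \<union> (Q \<inter> R)) X"
    unfolding saturates_def
  proof
    fix v
    assume "v \<in> X"
    then obtain p q where pq: "p \<in> P" "v \<in> p" "q \<in> Q" "v \<in> q"
      using sat unfolding saturates_def by blast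
    show "\<exists>e\<in>(P - R) \<union> (Q \<inter> R). v \<in> e"
    proof (cases "p \<in> R")
      case True
      have "q \<in> R"
      proof (cases "q \<in> P")
        case True
        then show ?thesis
          using P_unique[of p q v] pq \<open>p \<in> R\<close> by blast
      next
        case False
        then show ?thesis
          using closed[of q v] pq \<open>p \<in> R\<close> by blast
      qed
      then show ?thesis
        using pq by blast
    qed (use pq in blast)
  qed
qed

lemma swap_with_new_edge_pairwise_disjnt:
  assumes P: "pairwise disjnt P" and Q: "pairwise disjnt Q"
    and pq: "{p, q} \<in> P" and R: "R \<subseteq> sym_diff P Q - {{p, q}}"
    and covered: "r \<in> \<Union>R" "p \<notin> \<Union>R"
    and r_Q: "\<And>e. e \<in> Q \<Longrightarrow> r \<in> e \<Longrightarrow> e \<notin> R"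
    and closed: "\<And>v e. e \<in> sym_diff P Q \<Longrightarrow> v \<in> e \<Longrightarrow> v \<in> \<Union>R \<Longrightarrow> v \<noteq> q \<Longrightarrow> v \<noteq> r
      \<Longrightarrow> e \<in> R"
  shows "pairwise disjnt ((P - R - {{p, q}}) \<union> (Q \<inter> R) \<union> {{p, r}})"
proof -
  note P_unique = pairwise_disjnt_edge_unique[OF P]
  define A where "A = P - R - {{p, q}}"
  define B where "B = Q \<inter> R"
  have P_pq: "e = {p, q}" if "e \<in> P" "p \<in> e \<or> q \<in> e" for e
    using P_unique[OF that(1) pq] that(2) by blast
  obtain er where er: "er \<in> R" "r \<in> er"
    using covered(1) by blast
  then have "er \<in> P"
    using r_Q R by blast
  have AB: False if "a \<in> A" "b \<in> B" "v \<in> a" "v \<in> b" for a b v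
  proof -
    have "v \<in> \<Union>R" "a \<in> P" "a \<notin> R" "a \<noteq> {p, q}"
      using that unfolding A_def B_def by auto
    moreover have "v \<noteq> q"
      using P_pq that(3) \<open>a \<in> P\<close> \<open>a \<noteq> {p, q}\<close> by blast
    moreover have "v \<noteq> r"
      using r_Q that(2,4) unfolding B_def by blast
    ultimately have "a \<in> Q"
      using closed[of a v] that(3) by blast
    then show False
      using pairwise_disjnt_edge_unique[OF Q, of a b v] that \<open>a \<notin> R\<close> unfolding B_def by blast
  qed
  have AC: False if "a \<in> A" "v \<in> a" "v \<in> {p, r}" for a v
  proof -
    have a: "a \<in> P" "a \<notin> R" "a \<noteq> {p, q}"
      using that(1) unfolding A_def by auto
    show False
    proof (cases "v = p")
      case True
      then show False
        using P_pq[of a] a that(2) by blast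
    next
      case False
      then have "a = er"
        using P_unique[OF a(1) \<open>er \<in> P\<close> _ er(2)] that(2,3) by simp
      then show False
        using a(2) er(1) by simp
    qed
  qed
  have BC: False if "b \<in> B" "v \<in> b" "v \<in> {p, r}" for b v
  proof (cases "v = p")
    case True
    then show False
      using that(1,2) covered(2) unfolding B_def by blast
  next
    case False
    then have "v = r"
      using that(3) by simp
    then show False
      using r_Q[of b] that(1,2) unfolding B_def by blast
  qed
  have "pairwise disjnt A" "pairwise disjnt B"
    using P Q unfolding A_def B_def by (auto intro: pairwise_subset)
  then have "pairwise disjnt (A \<union> B)"
    using AB by (rule pairwise_disjnt_UnI)
  then show ?thesis
    unfolding A_def[symmetric] B_def[symmetric]
    by (rule pairwise_disjnt_UnI) (use AC BC in auto)
qed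

lemma swap_with_new_edge_saturates:
  assumes P: "pairwise disjnt P" and sat: "saturates P X" "saturates Q X"
    and pq: "{p, q} \<in> P" and R: "R \<subseteq> sym_diff P Q - {{p, q}}" and "q \<in> \<Union>R"
    and closed: "\<And>v e. e \<in> sym_diff P Q \<Longrightarrow> v \<in> e \<Longrightarrow> v \<in> \<Union>R \<Longrightarrow> v \<noteq> q \<Longrightarrow> v \<noteq> r
      \<Longrightarrow> e \<in> R"
  shows "saturates ((P - R - {{p, q}}) \<union> (Q \<inter> R) \<union> {{p, r}}) X"
  unfolding saturates_def
proof
  note P_unique = pairwise_disjnt_edge_unique[OF P]
  fix v
  assume "v \<in> X"
  then obtain ep eq where ep: "ep \<in> P" "v \<in> ep" and eq: "eq \<in> Q" "v \<in> eq"
    using sat unfolding saturates_def by blast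
  consider "v \<in> {p, r}" | "v = q" | "v \<notin> {p, q, r}"
    by blast
  then show "\<exists>e\<in>(P - R - {{p, q}}) \<union> (Q \<inter> R) \<union> {{p, r}}. v \<in> e"
  proof cases
    case 2
    then obtain e where "e \<in> R" "v \<in> e"
      using \<open>q \<in> \<Union>R\<close> by blast
    moreover have "e \<notin> P"
      using P_unique[OF _ pq, of e v] \<open>e \<in> R\<close> \<open>v \<in> e\<close> 2 R by blast
    ultimately show ?thesis
      using R by blast
  next
    case 3
    show ?thesis
    proof (cases "ep \<in> R \<and> eq \<notin> R")
      case True
      then have "eq \<in> P"
        using closed[of eq v] eq ep 3 by blast
      then show ?thesis
        using P_unique[of eq ep v] eq ep True by blast
    next
      case False
      then show ?thesis
        using ep eq 3 by blast
    qed
  qed blast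
qed

lemma swap_components:
  assumes P: "pairwise disjnt P" and Q: "pairwise disjnt Q" and sat: "saturates P X" "saturates Q X"
    and card2: "\<forall>e\<in>P \<union> Q. card e = 2" and pq: "{p, q} \<in> P - Q" and f: "f \<in> Q - P"
    and D: "D = sym_diff P Q - {{p, q}, f}"
    and apart: "f \<inter> (component D p \<union> component D q) = {}"
  defines "R \<equiv> component_edges D p \<union> component_edges D q \<union> {{p, q}}"
  shows "pairwise disjnt ((P - R) \<union> (Q \<inter> R))" "saturates ((P - R) \<union> (Q \<inter> R)) X"
proof -
  have R_sub: "R \<subseteq> sym_diff P Q"
    unfolding R_def using component_edges_subset[of D p] component_edges_subset[of D q] pq D
    by blast
  have closed: "\<And>v e. e \<in> sym_diff P Q \<Longrightarrow> v \<in> e \<Longrightarrow> v \<in> \<Union>R \<Longrightarrow> e \<in> R"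
  proof -
    fix v e
    assume e: "e \<in> sym_diff P Q" "v \<in> e" and "v \<in> \<Union>R"
    have v: "v \<in> component D p \<union> component D q"
      using \<open>v \<in> \<Union>R\<close> component_edges_vertex component_self unfolding R_def by fastforce
    consider "e = {p, q}" | "e = f" | "e \<in> D"
      using e(1) D by blast
    then show "e \<in> R"
    proof cases
      case 2
      then show ?thesis
        using apart v e(2) by blast
    next
      case 3
      then have "card e = 2"
        using card2 D by blast
      then show ?thesis
        using mem_component_edges[OF _ 3 e(2)] v unfolding R_def by blast
    qed (simp add: R_def)
  qed
  show "pairwise disjnt ((P - R) \<union> (Q \<inter> R))" "saturates ((P - R) \<union> (Q \<inter> R)) X"
    by (rule swap_closed[OF P Q sat R_sub], fact closed)+
qed

lemma swap_component_with_new_edge: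
  assumes P: "pairwise disjnt P" and Q: "pairwise disjnt Q" and sat: "saturates P X" "saturates Q X"
    and card2: "\<forall>e\<in>P \<union> Q. card e = 2" and pq: "{p, q} \<in> P - Q" and f: "f \<in> Q - P" "r \<in> f"
    and D: "D = sym_diff P Q - {{p, q}, f}"
    and r: "r \<in> component D q" "r \<noteq> q" and p: "p \<notin> component D q"
    and f_meets: "\<forall>v\<in>f. v \<in> component D q \<longrightarrow> v = r"
  defines "R \<equiv> component_edges D q"
  shows "pairwise disjnt ((P - R - {{p, q}}) \<union> (Q \<inter> R) \<union> {{p, r}})"
    "saturates ((P - R - {{p, q}}) \<union> (Q \<inter> R) \<union> {{p, r}}) X"
proof -
  have R_sub: "R \<subseteq> sym_diff P Q - {{p, q}}"
    unfolding R_def using component_edges_subset[of D q] D by blast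
  have "q \<in> component D r"
    using r(1) by (rule component_sym)
  then have "\<exists>e\<in>component_edges D r. q \<in> e"
    using r(2) component_edges_touch by metis
  then have q_covered: "q \<in> \<Union>R"
    unfolding R_def component_edges_def component_eq[OF r(1)] by blast
  have r_covered: "r \<in> \<Union>R"
    using component_edges_touch[OF r] unfolding R_def by blast
  have p_uncovered: "p \<notin> \<Union>R"
  proof
    assume "p \<in> \<Union>R"
    then obtain e where "e \<in> component_edges D q" "p \<in> e"
      unfolding R_def by blast
    then have "p \<in> component D q"
      by (rule component_edges_vertex)
    with p show False ..
  qed
  have r_Q: "\<And>e. e \<in> Q \<Longrightarrow> r \<in> e \<Longrightarrow> e \<notin> R"
  proof -
    fix e
    assume "e \<in> Q" "r \<in> e"
    moreover have "f \<in> Q"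
      using f(1) by blast
    ultimately have "e = f"
      using pairwise_disjnt_edge_unique[OF Q] f(2) by blast
    then show "e \<notin> R"
      using component_edges_subset[of D q] D unfolding R_def by blast
  qed
  have closed: "\<And>v e. e \<in> sym_diff P Q \<Longrightarrow> v \<in> e \<Longrightarrow> v \<in> \<Union>R \<Longrightarrow> v \<noteq> q
    \<Longrightarrow> v \<noteq> r \<Longrightarrow> e \<in> R"
  proof -
    fix v e
    assume e: "e \<in> sym_diff P Q" "v \<in> e" and "v \<in> \<Union>R" "v \<noteq> q" "v \<noteq> r"
    obtain e' where "e' \<in> component_edges D q" "v \<in> e'"
      using \<open>v \<in> \<Union>R\<close> unfolding R_def by blast
    then have v: "v \<in> component D q"
      by (rule component_edges_vertex)
    consider "e = {p, q}" | "e = f" | "e \<in> D"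
      using e(1) D by blast
    then show "e \<in> R"
    proof cases
      case 1
      then show ?thesis
        using e(2) v p \<open>v \<noteq> q\<close> by blast
    next
      case 2
      then show ?thesis
        using f_meets e(2) v \<open>v \<noteq> r\<close> by blast
    next
      case 3
      then have "card e = 2"
        using card2 D by blast
      then show ?thesis
        unfolding R_def using 3 e(2) v by (rule mem_component_edges)
    qed
  qed
  have "{p, q} \<in> P"
    using pq by blast
  show "pairwise disjnt ((P - R - {{p, q}}) \<union> (Q \<inter> R) \<union> {{p, r}})"
    by (rule swap_with_new_edge_pairwise_disjnt[OF P Q \<open>{p, q} \<in> P\<close> R_sub r_covered p_uncovered])
      (fact r_Q, fact closed)
  show "saturates ((P - R - {{p, q}}) \<union> (Q \<inter> R) \<union> {{p, r}}) X"
    by (rule swap_with_new_edge_saturates[OF P sat \<open>{p, q} \<in> P\<close> R_sub q_covered]) (fact closed)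
qed

subsection \<open>Edge-maximal graphs without a saturating matching\<close>

text \<open>Two matchings saturating \<open>X\<close>, one through the non-edge \<open>ac\<close> and one through the
  non-edge \<open>bd\<close>. In \<open>D\<close>, their symmetric difference without these two edges, every vertex has
  degree at most two and \<open>a, b, c, d\<close> have degree at most one, so no component of \<open>D\<close> contains
  three of them. Exchanging along the component of \<open>d\<close> or of \<open>b\<close>, and adding \<open>ab\<close> or
  \<open>bc\<close> where needed, gives a matching saturating \<open>X\<close> that avoids \<open>ac\<close> and \<open>bd\<close>.\<close>

locale saturating_matching_pair =
  fixes P Q :: "'a set set" and X :: "'a set" and a b c d :: 'a
  assumes P: "pairwise disjnt P" "saturates P X" "finite P"
    and Q: "pairwise disjnt Q" "saturates Q X" "finite Q"
    and card_edges: "\<forall>e\<in>P \<union> Q. card e = 2"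
    and ac: "{a, c} \<in> P - Q" and bd: "{b, d} \<in> Q - P"
    and distinct: "distinct [a, b, c, d]"
begin

definition D :: "'a set set" where
  "D = sym_diff P Q - {{a, c}, {b, d}}"

definition recombination :: "'a set set \<Rightarrow> bool" where
  "recombination T \<longleftrightarrow>
     pairwise disjnt T \<and> saturates T X \<and> T \<subseteq> P \<union> Q \<union> {{a, b}, {b, c}} - {{a, c}, {b, d}}"

lemma finite_D: "finite D"
  unfolding D_def using P(3) Q(3) by simp

lemma card_D: "\<forall>e\<in>D. card e = 2"
  unfolding D_def using card_edges by blast

lemma degree_D_le_2: "degree D w \<le> 2"
proof -
  have "degree D w \<le> card ({e \<in> P. w \<in> e} \<union> {e \<in> Q. w \<in> e})"
    unfolding degree_def D_def using P(3) Q(3) by (intro card_mono) auto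
  also have "\<dots> \<le> degree P w + degree Q w"
    unfolding degree_def by (rule card_Un_le)
  also have "\<dots> \<le> 2"
    using degree_pairwise_disjnt_le_1[OF P(3,1), of w] degree_pairwise_disjnt_le_1[OF Q(3,1), of w]
    by simp
  finally show ?thesis .
qed

lemma degree_D_le_1:
  assumes "w \<in> {a, b, c, d}"
  shows "degree D w \<le> 1"
proof (cases "w \<in> {a, c}")
  case True
  then have "{e \<in> D. w \<in> e} \<subseteq> {e \<in> Q. w \<in> e}"
    unfolding D_def using pairwise_disjnt_edge_unique[OF P(1) _ _ _ _, of _ "{a, c}" w] ac by auto
  then have "degree D w \<le> degree Q w"
    unfolding degree_def using Q(3) by (intro card_mono) auto
  then show ?thesis
    using degree_pairwise_disjnt_le_1[OF Q(3,1)] by (rule le_trans)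
next
  case False
  then have "w \<in> {b, d}"
    using assms by blast
  then have "{e \<in> D. w \<in> e} \<subseteq> {e \<in> P. w \<in> e}"
    unfolding D_def using pairwise_disjnt_edge_unique[OF Q(1) _ _ _ _, of _ "{b, d}" w] bd by auto
  then have "degree D w \<le> degree P w"
    unfolding degree_def using P(3) by (intro card_mono) auto
  then show ?thesis
    using degree_pairwise_disjnt_le_1[OF P(3,1)] by (rule le_trans)
qed

lemma two_of_abcd_per_component:
  assumes "{x, y, z} \<subseteq> {a, b, c, d}" "x \<in> component D z" "y \<in> component D z"
    and "x \<noteq> y" "x \<noteq> z" "y \<noteq> z"
  shows False
  using component_no_three_low_degree[OF finite_D card_D _ assms(2,3) _ _ _ assms(4-6)]
    degree_D_le_2 degree_D_le_1 assms(1) by simp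

lemma recombination_through_d:
  assumes x: "x \<in> {a, c}" "x \<in> component D d"
  shows "\<exists>T. recombination T"
proof -
  define x' where "x' = (if x = a then c else a)"
  have x': "{a, c} = {x, x'}" "x' \<in> {a, c}" "x' \<noteq> x"
    using x(1) distinct unfolding x'_def by auto
  have "x \<noteq> b" "x \<noteq> d" "x' \<noteq> d" "b \<noteq> d"
    using x(1) x'(2) distinct by auto
  have "b \<notin> component D d"
    using two_of_abcd_per_component[of x b d] x \<open>x \<noteq> b\<close> \<open>x \<noteq> d\<close> \<open>b \<noteq> d\<close> by blast
  have "x' \<notin> component D d"
    using two_of_abcd_per_component[of x x' d] x x'(2,3) \<open>x \<noteq> d\<close> \<open>x' \<noteq> d\<close> by blast
  then have meets: "\<forall>v\<in>{a, c}. v \<in> component D d \<longrightarrow> v = x"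
    using x'(1) by blast
  have D_eq: "D = sym_diff Q P - {{b, d}, {a, c}}"
    unfolding D_def by blast
  have card': "\<forall>e\<in>Q \<union> P. card e = 2"
    using card_edges by blast
  define R where "R = component_edges D d"
  define T where "T = (Q - R - {{b, d}}) \<union> (P \<inter> R) \<union> {{b, x}}"
  have "pairwise disjnt T" "saturates T X"
    unfolding T_def R_def
    using swap_component_with_new_edge[OF Q(1) P(1) Q(2) P(2) card' bd ac x(1) D_eq x(2)
        \<open>x \<noteq> d\<close> \<open>b \<notin> component D d\<close> meets] by blast+
  moreover have "{b, x} \<in> {{a, b}, {b, c}}"
    using x(1) by (auto simp: insert_commute)
  moreover have "{b, x} \<noteq> {a, c}" "{b, x} \<noteq> {b, d}"
    using x(1) \<open>x \<noteq> d\<close> distinct by (auto simp: doubleton_eq_iff)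
  moreover have "R \<subseteq> D"
    unfolding R_def by (rule component_edges_subset)
  ultimately show ?thesis
    unfolding recombination_def T_def D_def using ac by blast
qed

lemma recombination_through_b:
  assumes x: "x \<in> {a, c}" "x \<in> component D b" and "d \<notin> component D b"
  shows "\<exists>T. recombination T"
proof -
  define x' where "x' = (if x = a then c else a)"
  have x': "{x', x} = {a, c}" "x' \<in> {a, c}" "x' \<noteq> x"
    using x(1) distinct unfolding x'_def by auto
  have "x \<noteq> b" "x' \<noteq> b" "x' \<noteq> d"
    using x(1) x'(2) distinct by auto
  have comp_x: "component D x = component D b"
    using x(2) by (rule component_eq)
  have "x' \<notin> component D x"
    using two_of_abcd_per_component[of x x' b] x x'(2,3) \<open>x \<noteq> b\<close> \<open>x' \<noteq> b\<close> comp_x by auto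
  have "b \<in> component D x"
    using x(2) by (rule component_sym)
  have meets: "\<forall>v\<in>{b, d}. v \<in> component D x \<longrightarrow> v = b"
    using assms(3) comp_x by blast
  have D_eq: "D = sym_diff P Q - {{x', x}, {b, d}}"
    unfolding D_def x'(1) ..
  have "{x', x} \<in> P - Q"
    using ac x'(1) by simp
  define R where "R = component_edges D x"
  define T where "T = (P - R - {{x', x}}) \<union> (Q \<inter> R) \<union> {{x', b}}"
  have "pairwise disjnt T" "saturates T X"
    unfolding T_def R_def
    using swap_component_with_new_edge[OF P(1) Q(1) P(2) Q(2) card_edges \<open>{x', x} \<in> P - Q\<close> bd _
        D_eq \<open>b \<in> component D x\<close> \<open>x \<noteq> b\<close>[symmetric] \<open>x' \<notin> component D x\<close> meets]
    by blast+
  moreover have "{x', b} \<in> {{a, b}, {b, c}}"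
    using x'(2) by (auto simp: insert_commute)
  moreover have "{x', b} \<noteq> {a, c}" "{x', b} \<noteq> {b, d}"
    using x'(2) \<open>x' \<noteq> d\<close> distinct by (auto simp: doubleton_eq_iff)
  moreover have "R \<subseteq> D"
    unfolding R_def by (rule component_edges_subset)
  ultimately show ?thesis
    unfolding recombination_def T_def D_def x'(1) using bd by blast
qed

lemma recombination_apart:
  assumes "{a, c} \<inter> (component D b \<union> component D d) = {}"
  shows "\<exists>T. recombination T"
proof -
  have D_eq: "D = sym_diff Q P - {{b, d}, {a, c}}"
    unfolding D_def by blast
  have card': "\<forall>e\<in>Q \<union> P. card e = 2"
    using card_edges by blast
  define R where "R = component_edges D b \<union> component_edges D d \<union> {{b, d}}"
  define T where "T = (Q - R) \<union> (P \<inter> R)"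
  have "pairwise disjnt T" "saturates T X"
    unfolding T_def R_def using swap_components[OF Q(1) P(1) Q(2) P(2) card' bd ac D_eq assms]
    by blast+
  moreover have "R \<subseteq> D \<union> {{b, d}}"
    unfolding R_def using component_edges_subset[of D b] component_edges_subset[of D d] by blast
  moreover have "{a, c} \<noteq> {b, d}"
    using distinct by (auto simp: doubleton_eq_iff)
  ultimately show ?thesis
    unfolding recombination_def T_def D_def R_def using ac bd by blast
qed

lemma recombination_exists: "\<exists>T. recombination T"
proof (cases "\<exists>x\<in>{a, c}. x \<in> component D d")
  case True
  then show ?thesis
    using recombination_through_d by blast
next
  case not_d: False
  show ?thesis
  proof (cases "\<exists>x\<in>{a, c}. x \<in> component D b")
    case True
    then obtain x where x: "x \<in> {a, c}" "x \<in> component D b"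
      by blast
    have "d \<notin> component D b"
    proof
      assume "d \<in> component D b"
      then have "component D d = component D b"
        by (rule component_eq)
      with x not_d show False
        by blast
    qed
    with x show ?thesis
      by (rule recombination_through_b)
  next
    case False
    with not_d have "{a, c} \<inter> (component D b \<union> component D d) = {}"
      by blast
    then show ?thesis
      by (rule recombination_apart)
  qed
qed

end

lemma simple_graph_insert_edge:
  "simple_graph V E \<Longrightarrow> u \<in> V \<Longrightarrow> v \<in> V \<Longrightarrow> u \<noteq> v \<Longrightarrow> simple_graph V (insert {u, v} E)"
  unfolding simple_graph_def by auto

lemma saturating_matching_through_new_edge:
  assumes "\<not> saturable E X" "saturable (insert e E) X"
  obtains M where "matching (insert e E) M" "saturates M X" "e \<in> M"
proof -
  obtain M where M: "matching (insert e E) M" "saturates M X"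
    using assms(2) unfolding saturable_def by blast
  moreover have "e \<in> M"
  proof (rule ccontr)
    assume "e \<notin> M"
    then have "matching E M"
      using M(1) unfolding matching_def by blast
    with M(2) assms(1) show False
      unfolding saturable_def by blast
  qed
  ultimately show ?thesis
    using that by blast
qed

lemma maximal_non_saturable_transitive:
  assumes G: "simple_graph V E" and nsat: "\<not> saturable E X"
    and maximal: "\<And>e. e \<notin> E \<Longrightarrow> simple_graph V (insert e E) \<Longrightarrow> saturable (insert e E) X"
    and ab: "{a, b} \<in> E" and bc: "{b, c} \<in> E" and "a \<noteq> c"
    and d: "d \<in> V" "d \<noteq> b" "{b, d} \<notin> E"
  shows "{a, c} \<in> E"
proof (rule ccontr)
  assume "{a, c} \<notin> E"
  have "a \<in> V" "b \<in> V" "c \<in> V"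
    using simple_graph_edge_subset[OF G ab] simple_graph_edge_subset[OF G bc] by auto
  have "a \<noteq> b" "b \<noteq> c"
    using simple_graph_card_edge[OF G ab] simple_graph_card_edge[OF G bc] by auto
  have "d \<noteq> a" "d \<noteq> c"
    using ab bc d(3) by (auto simp: insert_commute)
  obtain M1 where M1: "matching (insert {a, c} E) M1" "saturates M1 X" "{a, c} \<in> M1"
    using nsat maximal[OF \<open>{a, c} \<notin> E\<close>]
      simple_graph_insert_edge[OF G \<open>a \<in> V\<close> \<open>c \<in> V\<close> \<open>a \<noteq> c\<close>]
    by (elim saturating_matching_through_new_edge)
  obtain M2 where M2: "matching (insert {b, d} E) M2" "saturates M2 X" "{b, d} \<in> M2"
    using nsat maximal[OF d(3)] simple_graph_insert_edge[OF G \<open>b \<in> V\<close> d(1) d(2)[symmetric]]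
    by (elim saturating_matching_through_new_edge)
  have M1E: "M1 \<subseteq> insert {a, c} E" and M2E: "M2 \<subseteq> insert {b, d} E"
    using M1(1) M2(1) unfolding matching_def by auto
  have "{a, c} \<noteq> {b, d}"
    using \<open>a \<noteq> b\<close> \<open>b \<noteq> c\<close> by (auto simp: doubleton_eq_iff)
  interpret saturating_matching_pair M1 M2 X a b c d
  proof
    show "pairwise disjnt M1" "pairwise disjnt M2"
      using M1(1) M2(1) unfolding matching_iff_pairwise_disjnt by auto
    show "saturates M1 X" "saturates M2 X"
      using M1(2) M2(2) .
    show "finite M1" "finite M2"
      using M1E M2E simple_graph_finite_edges[OF G] finite_subset by auto
    show "\<forall>e\<in>M1 \<union> M2. card e = 2"
      using M1E M2E simple_graph_card_edge[OF G] \<open>a \<noteq> c\<close> d(2) by auto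
    show "{a, c} \<in> M1 - M2" "{b, d} \<in> M2 - M1"
      using M1(3) M2(3) M1E M2E \<open>{a, c} \<notin> E\<close> d(3) \<open>{a, c} \<noteq> {b, d}\<close> by auto
    show "distinct [a, b, c, d]"
      using \<open>a \<noteq> b\<close> \<open>b \<noteq> c\<close> \<open>a \<noteq> c\<close> \<open>d \<noteq> a\<close> \<open>d \<noteq> c\<close> d(2) by auto
  qed
  obtain T where "recombination T"
    using recombination_exists by blast
  then have "matching E T" "saturates T X"
    unfolding recombination_def matching_iff_pairwise_disjnt using M1E M2E ab bc by auto
  with nsat show False
    unfolding saturable_def by blast
qed

definition adjacent_or_equal :: "'a set set \<Rightarrow> 'a set \<Rightarrow> ('a \<times> 'a) set" where
  "adjacent_or_equal E W = {(v, w). v \<in> W \<and> w \<in> W \<and> (v = w \<or> {v, w} \<in> E)}"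

lemma equiv_adjacent_or_equal:
  assumes trans: "\<And>a b c. b \<in> W \<Longrightarrow> {a, b} \<in> E \<Longrightarrow> {b, c} \<in> E \<Longrightarrow> a \<noteq> c \<Longrightarrow> {a, c} \<in> E"
  shows "equiv W (adjacent_or_equal E W)"
  unfolding adjacent_or_equal_def
proof (rule equivI)
  show "sym {(v, w). v \<in> W \<and> w \<in> W \<and> (v = w \<or> {v, w} \<in> E)}"
    by (rule symI) (auto simp: insert_commute)
  show "trans {(v, w). v \<in> W \<and> w \<in> W \<and> (v = w \<or> {v, w} \<in> E)}"
  proof (rule transI)
    fix u v w
    assume "(u, v) \<in> {(v, w). v \<in> W \<and> w \<in> W \<and> (v = w \<or> {v, w} \<in> E)}"
      "(v, w) \<in> {(v, w). v \<in> W \<and> w \<in> W \<and> (v = w \<or> {v, w} \<in> E)}"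
    then show "(u, w) \<in> {(v, w). v \<in> W \<and> w \<in> W \<and> (v = w \<or> {v, w} \<in> E)}"
      using trans[of v u w] by auto
  qed
qed (auto simp: refl_on_def)

lemma clique_adjacent_or_equal_class:
  assumes "equiv W (adjacent_or_equal E W)" "K \<in> W // adjacent_or_equal E W"
  shows "clique E K"
  unfolding clique_def
proof (intro ballI impI)
  fix u v
  assume "u \<in> K" "v \<in> K" "u \<noteq> v"
  then have "(u, v) \<in> adjacent_or_equal E W"
    using in_quotient_imp_in_rel[OF assms] by blast
  with \<open>u \<noteq> v\<close> show "{u, v} \<in> E"
    unfolding adjacent_or_equal_def by simp
qed

lemma adjacent_or_equal_class_closed:
  assumes "equiv W (adjacent_or_equal E W)" "K \<in> W // adjacent_or_equal E W"
    and "v \<in> K" "w \<in> W" "{v, w} \<in> E"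
  shows "w \<in> K"
proof -
  have "v \<in> W"
    using in_quotient_imp_subset[OF assms(1,2)] assms(3) by blast
  then have "(v, w) \<in> adjacent_or_equal E W"
    using assms(4,5) unfolding adjacent_or_equal_def by simp
  then show ?thesis
    using in_quotient_imp_closed[OF assms(1,2,3)] by blast
qed

lemma boundary_Union_classes_subset:
  assumes G: "simple_graph V E" and eq: "equiv W (adjacent_or_equal E W)"
    and B: "B \<subseteq> W // adjacent_or_equal E W"
  shows "boundary E (\<Union>B) \<subseteq> V - W"
proof
  fix u
  assume "u \<in> boundary E (\<Union>B)"
  then obtain v K where "K \<in> B" "v \<in> K" "{u, v} \<in> E" "u \<notin> \<Union>B"
    unfolding boundary_def by blast
  then have "u \<in> V"
    using simple_graph_edge_subset[OF G] by blast
  moreover have "u \<notin> W"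
  proof
    assume "u \<in> W"
    moreover have "{v, u} \<in> E"
      using \<open>{u, v} \<in> E\<close> by (simp add: insert_commute)
    ultimately have "u \<in> K"
      using adjacent_or_equal_class_closed[OF eq] B \<open>K \<in> B\<close> \<open>v \<in> K\<close> by blast
    with \<open>K \<in> B\<close> \<open>u \<notin> \<Union>B\<close> show False
      by blast
  qed
  ultimately show "u \<in> V - W"
    by blast
qed

lemma even_card_if_covered_by_closed_matching:
  assumes "pairwise disjnt N" "\<forall>e\<in>N. card e = 2" "K \<subseteq> \<Union>N" "\<forall>e\<in>N. e \<inter> K \<noteq> {} \<longrightarrow> e \<subseteq> K"
  shows "even (card K)"
proof -
  have "K \<subseteq> \<Union>{e \<in> N. e \<subseteq> K}"
  proof
    fix z
    assume "z \<in> K"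
    then obtain e where "e \<in> N" "z \<in> e"
      using assms(3) by blast
    with \<open>z \<in> K\<close> assms(4) show "z \<in> \<Union>{e \<in> N. e \<subseteq> K}"
      by blast
  qed
  then have "K = \<Union>{e \<in> N. e \<subseteq> K}"
    by blast
  also have "card \<dots> = 2 * card {e \<in> N. e \<subseteq> K}"
    using assms(2) by (intro card_Union_pairwise_disjnt_edges pairwise_subset[OF assms(1)]) auto
  finally show ?thesis
    by simp
qed

lemma odd_class_not_covered:
  assumes G: "simple_graph V E" and eq: "equiv W (adjacent_or_equal E W)"
    and K: "K \<in> W // adjacent_or_equal E W" "odd (card K)"
    and N: "matching E N" "\<Union>N \<subseteq> W"
  shows "\<not> K \<subseteq> \<Union>N"
proof
  assume "K \<subseteq> \<Union>N"
  have "e \<subseteq> K" if e: "e \<in> N" "e \<inter> K \<noteq> {}" for e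
  proof
    fix w
    assume "w \<in> e"
    obtain v where "v \<in> e" "v \<in> K"
      using e(2) by blast
    have "e \<in> E"
      using N(1) e(1) unfolding matching_def by blast
    then obtain v' where "e = {v, v'}"
      using simple_graph_card_edge[OF G] \<open>v \<in> e\<close> card_2_other_elem by metis
    moreover have "v' \<in> W"
      using N(2) e(1) \<open>e = {v, v'}\<close> by blast
    ultimately have "v' \<in> K"
      using adjacent_or_equal_class_closed[OF eq K(1) \<open>v \<in> K\<close>] \<open>e \<in> E\<close> by blast
    with \<open>w \<in> e\<close> \<open>e = {v, v'}\<close> \<open>v \<in> K\<close> show "w \<in> K"
      by blast
  qed
  then have "even (card K)"
    using N(1) simple_graph_card_edge[OF G] \<open>K \<subseteq> \<Union>N\<close>
    by (intro even_card_if_covered_by_closed_matching) (auto simp: matching_iff_pairwise_disjnt)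
  with K(2) show False
    by simp
qed

text \<open>Each odd class inside \<open>X\<close> has a vertex missed by the matching that the deficiency
  condition provides inside their union, and all neighbours of that union outside it lie in
  \<open>V - W\<close>.\<close>

lemma card_odd_classes_le:
  assumes G: "simple_graph V E" and "W \<subseteq> V" and eq: "equiv W (adjacent_or_equal E W)"
    and cond: "deficiency_condition E X"
  shows "card {K \<in> W // adjacent_or_equal E W. K \<subseteq> X \<and> odd (card K)} \<le> card (V - W)"
proof -
  define B where "B = {K \<in> W // adjacent_or_equal E W. K \<subseteq> X \<and> odd (card K)}"
  have B_classes: "B \<subseteq> W // adjacent_or_equal E W"
    unfolding B_def by blast
  have finV: "finite V"
    using G by (rule simple_graph_finite)
  have "\<Union>B \<subseteq> W"
    using B_classes in_quotient_imp_subset[OF eq] by blast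
  moreover have "finite W"
    using \<open>W \<subseteq> V\<close> finV by (rule finite_subset)
  ultimately have finS: "finite (\<Union>B)"
    by (rule finite_subset)
  have "\<Union>B \<subseteq> X"
    unfolding B_def by blast
  then obtain N where N: "matching E N" "\<Union>N \<subseteq> \<Union>B"
    and card_S: "card (\<Union>B) \<le> 2 * card N + card (boundary E (\<Union>B))"
    using cond unfolding deficiency_condition_def by blast
  have "\<Union>N \<subseteq> W"
    using N(2) \<open>\<Union>B \<subseteq> W\<close> by (rule order_trans)
  have "\<forall>K\<in>B. \<exists>z. z \<in> K - \<Union>N"
  proof
    fix K
    assume "K \<in> B"
    then have "\<not> K \<subseteq> \<Union>N"
      unfolding B_def using odd_class_not_covered[OF G eq _ _ N(1) \<open>\<Union>N \<subseteq> W\<close>] by blast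
    then show "\<exists>z. z \<in> K - \<Union>N"
      by blast
  qed
  then obtain g where g: "\<forall>K\<in>B. g K \<in> K - \<Union>N"
    by (metis bchoice)
  have "inj_on g B"
  proof (rule inj_onI)
    fix K K'
    assume "K \<in> B" "K' \<in> B" "g K = g K'"
    then have "g K \<in> K" "g K \<in> K'"
      using g by auto
    then have "K \<inter> K' \<noteq> {}"
      by blast
    then show "K = K'"
      using quotient_disj[OF eq] B_classes \<open>K \<in> B\<close> \<open>K' \<in> B\<close> by blast
  qed
  then have "card B = card (g ` B)"
    by (simp add: card_image)
  also have "\<dots> \<le> card (\<Union>B - \<Union>N)"
    using g finS by (intro card_mono) auto
  also have "\<dots> = card (\<Union>B) - card (\<Union>N)"
    using finite_subset[OF N(2) finS] N(2) by (rule card_Diff_subset)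
  also have "card (\<Union>N) = 2 * card N"
    using N(1) simple_graph_card_edge[OF G]
    by (intro card_Union_pairwise_disjnt_edges) (auto simp: matching_iff_pairwise_disjnt)
  also have "card (\<Union>B) - 2 * card N \<le> card (boundary E (\<Union>B))"
    using card_S by linarith
  also have "\<dots> \<le> card (V - W)"
    using boundary_Union_classes_subset[OF G eq B_classes] finV by (intro card_mono) auto
  finally show ?thesis
    unfolding B_def .
qed

lemma even_card_Union_pairwise_disjnt:
  assumes "pairwise disjnt \<P>" "\<forall>P\<in>\<P>. finite P \<and> even (card P)"
  shows "even (card (\<Union>\<P>))"
  using assms by (subst card_Union_disjoint) (auto intro: dvd_sum)

lemma pairwise_disjnt_merge:
  assumes "pairwise disjnt \<P>" "Q \<in> \<P>" "\<forall>P\<in>\<P>. disjnt Z P"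
  shows "pairwise disjnt (insert (Q \<union> Z) (\<P> - {Q}))"
proof -
  have "pairwise disjnt (\<P> - {Q})"
    using assms(1) by (rule pairwise_subset) blast
  moreover have "disjnt (Q \<union> Z) P" if "P \<in> \<P> - {Q}" for P
    using assms that unfolding pairwise_def disjnt_def by blast
  ultimately show ?thesis
    by (simp add: pairwise_insert disjnt_sym)
qed

lemma saturable_if_clique_partition_universal_rest:
  assumes G: "simple_graph V E" and "X \<subseteq> V" and even_V: "V \<subseteq> X \<Longrightarrow> even (card V)"
    and parts: "\<forall>P\<in>\<P>. clique E P \<and> (even (card P) \<or> \<not> P \<subseteq> X)" "pairwise disjnt \<P>" "\<Union>\<P> \<subseteq> V"
    and universal: "\<And>u v. u \<in> V - \<Union>\<P> \<Longrightarrow> v \<in> V \<Longrightarrow> v \<noteq> u \<Longrightarrow> {u, v} \<in> E"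
  shows "saturable E X"
proof -
  define Z where "Z = V - \<Union>\<P>"
  have finV: "finite V"
    using G by (rule simple_graph_finite)
  have fin: "finite P" if "P \<in> insert Z \<P>" for P
    using that parts(3) finite_subset[OF _ finV] unfolding Z_def by blast
  have "clique E Z"
    unfolding clique_def Z_def using universal by blast
  have Z_disjnt: "\<forall>P\<in>\<P>. disjnt Z P"
    unfolding Z_def disjnt_def by blast
  have cover: "\<Union>(insert Z \<P>) = V"
    using parts(3) unfolding Z_def by blast
  show ?thesis
  proof (cases "even (card Z) \<or> \<not> Z \<subseteq> X")
    case True
    have "\<forall>P\<in>insert Z \<P>. finite P \<and> clique E P \<and> (even (card P) \<or> \<not> P \<subseteq> X)"
      using fin parts(1) \<open>clique E Z\<close> True by blast
    moreover have "pairwise disjnt (insert Z \<P>)"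
      using parts(2) Z_disjnt by (auto simp: pairwise_insert disjnt_sym)
    moreover have "X \<subseteq> \<Union>(insert Z \<P>)"
      using cover \<open>X \<subseteq> V\<close> by simp
    ultimately show ?thesis
      by (rule saturable_if_clique_partition)
  next
    case odd_Z: False
    show ?thesis
    proof (cases "\<exists>Q\<in>\<P>. \<not> Q \<subseteq> X")
      case True
      then obtain Q where Q: "Q \<in> \<P>" "\<not> Q \<subseteq> X"
        by blast
      have "clique E (Q \<union> Z)"
        using parts(1) Q(1) universal parts(3) unfolding Z_def by (intro clique_Un_universal) blast+
      then have "\<forall>P\<in>insert (Q \<union> Z) (\<P> - {Q}). finite P \<and> clique E P \<and> (even (card P) \<or> \<not> P \<subseteq> X)"
        using fin parts(1) Q by auto
      moreover have "pairwise disjnt (insert (Q \<union> Z) (\<P> - {Q}))"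
        using parts(2) Q(1) Z_disjnt by (rule pairwise_disjnt_merge)
      moreover have "X \<subseteq> \<Union>(insert (Q \<union> Z) (\<P> - {Q}))"
        using cover Q(1) \<open>X \<subseteq> V\<close> by blast
      ultimately show ?thesis
        by (rule saturable_if_clique_partition)
    next
      case False
      then have "V \<subseteq> X"
        using odd_Z cover by blast
      then have "even (card (\<Union>\<P>))"
        using parts fin False by (intro even_card_Union_pairwise_disjnt) auto
      moreover have "card V = card (\<Union>\<P>) + card Z"
        unfolding Z_def using finV parts(3) by (simp add: card_Diff_subset card_mono finite_subset)
      ultimately show ?thesis
        using even_V[OF \<open>V \<subseteq> X\<close>] odd_Z by simp
    qed
  qed
qed

lemma pairwise_disjnt_quotient: "equiv A r \<Longrightarrow> pairwise disjnt (A // r)"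
  unfolding pairwise_def disjnt_def using quotient_disj by blast

lemma pairwise_disjnt_insert_distinct_outside:
  assumes "pairwise disjnt \<K>" "B \<subseteq> \<K>" "inj_on \<rho> B" "\<forall>K\<in>B. \<rho> K \<notin> \<Union>\<K>"
  shows "pairwise disjnt ((\<lambda>K. insert (\<rho> K) K) ` B \<union> (\<K> - B))"
proof (rule pairwiseI)
  fix P P'
  assume P: "P \<in> (\<lambda>K. insert (\<rho> K) K) ` B \<union> (\<K> - B)" "P' \<in> (\<lambda>K. insert (\<rho> K) K) ` B \<union> (\<K> - B)"
    and "P \<noteq> P'"
  obtain K K' where K: "K \<in> \<K>" "K' \<in> \<K>" "K \<noteq> K'"
    and P_cases: "P = K \<or> (K \<in> B \<and> P = insert (\<rho> K) K)" "P' = K' \<or> (K' \<in> B \<and> P' = insert (\<rho> K') K')"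
    using P \<open>P \<noteq> P'\<close> assms(2) by blast
  have "disjnt K K'"
    using assms(1) K unfolding pairwise_def by blast
  moreover have "\<rho> K \<notin> K'" if "K \<in> B"
    using assms(4) that K(2) by blast
  moreover have "\<rho> K' \<notin> K" if "K' \<in> B"
    using assms(4) that K(1) by blast
  moreover have "\<rho> K \<noteq> \<rho> K'" if "K \<in> B" "K' \<in> B"
    using assms(3) that K(3) unfolding inj_on_def by blast
  ultimately show "disjnt P P'"
    using P_cases unfolding disjnt_def by auto
qed

definition universal_vertices :: "'a set \<Rightarrow> 'a set set \<Rightarrow> 'a set" where
  "universal_vertices V E = {u \<in> V. \<forall>v\<in>V. v \<noteq> u \<longrightarrow> {u, v} \<in> E}"

lemma clique_parity_insert_partners:
  assumes "\<forall>K\<in>\<K>. finite K \<and> clique E K" "B \<subseteq> \<K>"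
    and "\<forall>K\<in>B. odd (card K) \<and> \<rho> K \<notin> K \<and> (\<forall>v\<in>K. {\<rho> K, v} \<in> E)"
    and "\<forall>K\<in>\<K> - B. even (card K) \<or> \<not> K \<subseteq> X"
  shows "\<forall>P\<in>(\<lambda>K. insert (\<rho> K) K) ` B \<union> (\<K> - B). clique E P \<and> (even (card P) \<or> \<not> P \<subseteq> X)"
proof
  fix P
  assume "P \<in> (\<lambda>K. insert (\<rho> K) K) ` B \<union> (\<K> - B)"
  then consider K where "K \<in> B" "P = insert (\<rho> K) K" | "P \<in> \<K> - B"
    by blast
  then show "clique E P \<and> (even (card P) \<or> \<not> P \<subseteq> X)"
  proof cases
    case (1 K)
    then have "clique E (K \<union> {\<rho> K})"
      using assms(1-3) by (intro clique_Un_universal) (auto simp: insert_commute)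
    moreover have "even (card P)"
      using 1 assms(1-3) by auto
    ultimately show ?thesis
      using 1(2) by simp
  qed (use assms in blast)
qed

text \<open>The non-universal vertices split into cliques; each odd clique inside \<open>X\<close> gets its own
  universal partner, and the remaining universal vertices form one more clique.\<close>

lemma saturable_if_universal_and_transitive:
  assumes G: "simple_graph V E" and X: "X \<subseteq> V" and cond: "deficiency_condition E X"
    and trans: "\<And>a b c. b \<in> V - universal_vertices V E \<Longrightarrow> {a, b} \<in> E \<Longrightarrow> {b, c} \<in> E \<Longrightarrow> a \<noteq> c
      \<Longrightarrow> {a, c} \<in> E"
  shows "saturable E X"
proof -
  define U where "U = universal_vertices V E"
  define W where "W = V - U"
  have "U \<subseteq> V"
    unfolding U_def universal_vertices_def by blast
  have finV: "finite V"
    using G by (rule simple_graph_finite)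
  have eq: "equiv W (adjacent_or_equal E W)"
    using trans unfolding W_def U_def by (rule equiv_adjacent_or_equal)
  define \<K> where "\<K> = W // adjacent_or_equal E W"
  define B where "B = {K \<in> \<K>. K \<subseteq> X \<and> odd (card K)}"
  have classes: "\<forall>K\<in>\<K>. finite K \<and> clique E K \<and> K \<subseteq> W"
  proof
    fix K
    assume "K \<in> \<K>"
    then have "clique E K" "K \<subseteq> W"
      unfolding \<K>_def using clique_adjacent_or_equal_class[OF eq] in_quotient_imp_subset[OF eq] by auto
    moreover have "finite K"
      using \<open>K \<subseteq> W\<close> finV unfolding W_def by (meson Diff_subset finite_subset)
    ultimately show "finite K \<and> clique E K \<and> K \<subseteq> W"
      by blast
  qed
  have "card B \<le> card U"
    using card_odd_classes_le[OF G _ eq cond] \<open>U \<subseteq> V\<close> unfolding B_def \<K>_def W_def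
    by (simp add: double_diff)
  moreover have "finite B"
  proof (rule finite_subset)
    show "B \<subseteq> Pow W"
      using classes unfolding B_def by blast
    show "finite (Pow W)"
      using finV unfolding W_def by simp
  qed
  moreover have "finite U"
    using \<open>U \<subseteq> V\<close> finV by (rule finite_subset)
  ultimately obtain \<rho> where \<rho>: "\<rho> ` B \<subseteq> U" "inj_on \<rho> B"
    using card_le_inj[OF \<open>finite B\<close> \<open>finite U\<close>] by blast
  have universal: "{u, v} \<in> E" if "u \<in> U" "v \<in> V" "v \<noteq> u" for u v
    using that unfolding U_def universal_vertices_def by blast
  have "\<Union>\<K> = W"
    unfolding \<K>_def using eq by (rule Union_quotient)
  define \<P> where "\<P> = (\<lambda>K. insert (\<rho> K) K) ` B \<union> (\<K> - B)"
  show ?thesis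
  proof (rule saturable_if_clique_partition_universal_rest[OF G X, of \<P>])
    show "even (card V)" if "V \<subseteq> X"
      using G cond X that by (intro even_card_if_deficiency_condition_all) auto
    have "\<forall>K\<in>B. odd (card K) \<and> \<rho> K \<notin> K \<and> (\<forall>v\<in>K. {\<rho> K, v} \<in> E)"
      using \<rho>(1) classes universal unfolding B_def W_def by blast
    then show "\<forall>P\<in>\<P>. clique E P \<and> (even (card P) \<or> \<not> P \<subseteq> X)"
      unfolding \<P>_def using classes by (intro clique_parity_insert_partners) (auto simp: B_def)
    show "pairwise disjnt \<P>"
      unfolding \<P>_def
    proof (rule pairwise_disjnt_insert_distinct_outside)
      show "pairwise disjnt \<K>"
        unfolding \<K>_def using eq by (rule pairwise_disjnt_quotient)
      show "\<forall>K\<in>B. \<rho> K \<notin> \<Union>\<K>"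
        using \<rho>(1) \<open>\<Union>\<K> = W\<close> unfolding W_def by blast
    qed (use \<rho>(2) in \<open>auto simp: B_def\<close>)
    show "\<Union>\<P> \<subseteq> V"
      unfolding \<P>_def using classes \<rho>(1) \<open>U \<subseteq> V\<close> unfolding W_def B_def by blast
    have "W \<subseteq> \<Union>\<P>"
      unfolding \<P>_def using \<open>\<Union>\<K> = W\<close> by blast
    then show "{u, v} \<in> E" if "u \<in> V - \<Union>\<P>" "v \<in> V" "v \<noteq> u" for u v
      using universal that unfolding W_def by blast
  qed
qed

theorem saturable_if_deficiency_condition:
  assumes G: "simple_graph V E" and X: "X \<subseteq> V" and cond: "deficiency_condition E X"
  shows "saturable E X"
proof (rule ccontr)
  assume "\<not> saturable E X"
  define \<F> where "\<F> = {F. E \<subseteq> F \<and> simple_graph V F \<and> \<not> saturable F X}"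
  have "finite \<F>"
  proof (rule finite_subset)
    show "\<F> \<subseteq> Pow (Pow V)"
      unfolding \<F>_def simple_graph_def by blast
    show "finite (Pow (Pow V))"
      using simple_graph_finite[OF G] by simp
  qed
  moreover have "E \<in> \<F>"
    unfolding \<F>_def using G \<open>\<not> saturable E X\<close> by blast
  ultimately obtain F where "F \<in> \<F>" "E \<subseteq> F" and maximal_F: "\<forall>F'\<in>\<F>. F \<subseteq> F' \<longrightarrow> F = F'"
    using finite_has_maximal2 by metis
  then have GF: "simple_graph V F" and nsat: "\<not> saturable F X"
    unfolding \<F>_def by auto
  have maximal: "saturable (insert e F) X" if "e \<notin> F" "simple_graph V (insert e F)" for e
    using maximal_F that \<open>E \<subseteq> F\<close> unfolding \<F>_def by blast
  have "saturable F X"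
  proof (rule saturable_if_universal_and_transitive[OF GF X])
    show "deficiency_condition F X"
      using cond \<open>E \<subseteq> F\<close> GF by (rule deficiency_condition_mono)
  next
    fix a b c
    assume b: "b \<in> V - universal_vertices V F" and "{a, b} \<in> F" "{b, c} \<in> F" "a \<noteq> c"
    then obtain d where "d \<in> V" "d \<noteq> b" "{b, d} \<notin> F"
      unfolding universal_vertices_def by blast
    then show "{a, c} \<in> F"
      using maximal_non_saturable_transitive[OF GF nsat maximal] \<open>{a, b} \<in> F\<close> \<open>{b, c} \<in> F\<close>
        \<open>a \<noteq> c\<close> by blast
  qed
  with nsat show False ..
qed

lemma saturable_core_if_mitigating_matching:
  assumes G: "simple_graph V E" "E \<noteq> {}" and "mitigating_set V E S" "matching E S"
  shows "saturable E (core V E)"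
proof -
  have "S \<subseteq> E"
    using assms(3) unfolding mitigating_set_def by simp
  then have "saturates S (core V E)"
    using assms(3) mitigating_set_iff_saturates_core[OF simple_graph_finite[OF G(1)]
        simple_graph_finite_edges[OF G(1)] max_degree_pos[OF G]] by blast
  with assms(4) show ?thesis
    unfolding saturable_def by blast
qed

theorem theorem2p3:
  fixes V :: "'a set" and E :: "'a set set"
  assumes "simple_graph V E" and "E \<noteq> {}"
  shows "((\<exists>M. matching E M \<and> saturates M (core V E))
            \<longleftrightarrow> (\<exists>S. min_mitigating_set V E S \<and> matching E S))
       \<and> ((\<exists>S. min_mitigating_set V E S \<and> matching E S)
            \<longleftrightarrow> (\<forall>S \<subseteq> core V E.
                   real (es_delta (closed_nbhd E S) (induced_edges E (closed_nbhd E S)))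
                     \<le> real (card (closed_nbhd E S)) / 2))"
proof -
  have "core V E \<subseteq> V"
    unfolding core_def by blast
  have real_iff: "real k \<le> real n / 2 \<longleftrightarrow> 2 * k \<le> n" for k n :: nat
    by linarith
  have one_two: "saturable E (core V E) \<longleftrightarrow> (\<exists>S. min_mitigating_set V E S \<and> matching E S)"
    using min_mitigating_matching_if_saturable_core[OF assms] saturable_core_if_mitigating_matching[OF assms]
    unfolding min_mitigating_set_def by blast
  have one_three: "saturable E (core V E) \<longleftrightarrow> (\<forall>S \<subseteq> core V E.
      2 * es_delta (closed_nbhd E S) (induced_edges E (closed_nbhd E S)) \<le> card (closed_nbhd E S))"
    using es_delta_closed_nbhd_le_if_saturable_core[OF assms]
      saturable_if_deficiency_condition[OF assms(1) \<open>core V E \<subseteq> V\<close>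
        deficiency_condition_core_if_es_delta_closed_nbhd_le[OF assms]]
    by blast
  show ?thesis
    using one_two one_three unfolding real_iff saturable_def by blast
qed

end
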